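(* Let $\mathbbm k$ be an algebraically closed field, $n\ge1$ with $\mathrm{char}\,\mathbbm k\nmid 2n$, $a\in\mathbb Z/n$ with $a^2\equiv1\pmod n$, $m\in\mathbb Z/n$ with $(1-a)m\equiv0$, and $G=G_{n,a,m}$, acting trivially on $\mathbbm k^\times$. Let $d_\pm=\gcd(a\pm1,n)$. Then $$\mathrm H^2(G,\mathbbm k^\times)\cong\begin{cases}0&\text{if }d_-d_+=n\text{ or }G\text{ is non-split},\\ \mathbb Z/2&\text{if }d_-d_+=2n\text{ and }G\text{ is split}.\end{cases}$$ Consequently, for a stacky curve $\mathcal C$ over $\mathbbm k$, a doubly-twisted node with stabilizer $G$ contributes this group as a direct summand of $\mathrm H^2(\mathcal C,\mathbb G_m)$; in particular $\mathrm H^2([\operatorname{Spec}\mathbbm k[x,y]/(xy)\,/\,\mu_n\rtimes\mathbb Z/2],\mathbb G_m)=\mathbb Z/2$ when $d_-d_+=2n$ (e.g. $a=-1$).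
   Context: $G_{n,a,m}$ is the group generated by $t,\sigma$ with relations $t^n=1$, $\sigma t\sigma^{-1}=t^a$, $\sigma^2=t^m$ (an extension of $\mathbb Z/2$ by $\mu_n\cong\langle t\rangle$); $G$ is split if it is isomorphic to the semidirect product $\mu_n\rtimes\mathbb Z/2$ (equivalently $\gcd(a+1,n)\mid m$). The Brauer-type group of a stacky curve $\mathcal C$ (tame, proper, geometrically integral one-dimensional DM stack with trivial generic stabilizer over algebraically closed $\mathbbm k$) is $\mathrm H^2(\mathcal C,\mathbb G_m)=\bigoplus_i\mathrm H^2(G_i,\mathbbm k^\times)$ over the singular points $p_i$ of $\mathcal C_{\mathrm{red}}$ with geometric stabilizers $G_i$ acting trivially. A doubly-twisted node is a node étale locally of the form $[\operatorname{Spec}R/G]$ with $\mu_n\subset G$ acting by $(x,y)\mapsto(\zeta_nx,\zeta_n^ay)$ and elements outside $\mu_n$ interchanging the two branches of $xy=0$. *)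

theory Defs
  imports "HOL-Algebra.Algebra" "HOL-Computational_Algebra.Polynomial"
begin

definition alg_closed :: "'k::field itself \<Rightarrow> bool" where
  "alg_closed _ \<longleftrightarrow> (\<forall>p::'k poly. degree p \<ge> 1 \<longrightarrow> (\<exists>x. poly p x = 0))"

text \<open>The group G_{n,a,m}: elements (i,e) stand for t^i sigma^e, 0 \<le> i < n, e \<in> {0,1};
  multiplication t^i sigma^e t^j sigma^f = t^(i + a^e j) sigma^(e+f), with sigma^2 = t^m.\<close>
definition Gnam_mult :: "nat \<Rightarrow> int \<Rightarrow> int \<Rightarrow> int \<times> int \<Rightarrow> int \<times> int \<Rightarrow> int \<times> int" where
  "Gnam_mult n a m x y =
     ((fst x + (if snd x = 1 then a else 1) * fst y
         + (if snd x = 1 \<and> snd y = 1 then m else 0)) mod int n,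
      (snd x + snd y) mod 2)"

definition Gnam_carrier :: "nat \<Rightarrow> (int \<times> int) set" where
  "Gnam_carrier n = {0..<int n} \<times> {0, 1}"

definition Gnam :: "nat \<Rightarrow> int \<Rightarrow> int \<Rightarrow> (int \<times> int) monoid" where
  "Gnam n a m = \<lparr> carrier = Gnam_carrier n, monoid.mult = Gnam_mult n a m, one = (0, 0) \<rparr>"

text \<open>G is split iff it is isomorphic to the semidirect product mu_n \<rtimes> Z/2 = G_{n,a,0}.\<close>
definition Gnam_split :: "nat \<Rightarrow> int \<Rightarrow> int \<Rightarrow> bool" where
  "Gnam_split n a m \<longleftrightarrow> Gnam n a m \<cong> Gnam n a 0"

definition cocycles2 :: "('g, 'b) monoid_scheme \<Rightarrow> ('g \<Rightarrow> 'g \<Rightarrow> 'k::field) set" where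
  "cocycles2 G = {f. (\<forall>x\<in>carrier G. \<forall>y\<in>carrier G. f x y \<noteq> 0)
      \<and> (\<forall>x y. x \<notin> carrier G \<or> y \<notin> carrier G \<longrightarrow> f x y = 1)
      \<and> (\<forall>x\<in>carrier G. \<forall>y\<in>carrier G. \<forall>z\<in>carrier G.
           f y z * f x (y \<otimes>\<^bsub>G\<^esub> z) = f (x \<otimes>\<^bsub>G\<^esub> y) z * f x y)}"

definition coboundaries2 :: "('g, 'b) monoid_scheme \<Rightarrow> ('g \<Rightarrow> 'g \<Rightarrow> 'k::field) set" where
  "coboundaries2 G = {f. \<exists>h. (\<forall>x\<in>carrier G. h x \<noteq> 0) \<and>
      (\<forall>x y. f x y = (if x \<in> carrier G \<and> y \<in> carrier G
                      then h y * inverse (h (x \<otimes>\<^bsub>G\<^esub> y)) * h x else 1))}"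

definition cocycle_group :: "('g, 'b) monoid_scheme \<Rightarrow> ('g \<Rightarrow> 'g \<Rightarrow> 'k::field) monoid" where
  "cocycle_group G = \<lparr> carrier = cocycles2 G, monoid.mult = (\<lambda>f g x y. f x y * g x y), one = (\<lambda>x y. 1) \<rparr>"

definition H2 :: "('g, 'b) monoid_scheme \<Rightarrow> 'k::field itself \<Rightarrow> ('g \<Rightarrow> 'g \<Rightarrow> 'k) set monoid" where
  "H2 G _ = cocycle_group G Mod (coboundaries2 G :: ('g \<Rightarrow> 'g \<Rightarrow> 'k) set)"

end

theory Submission
  imports Defs
begin

text \<open>
  A normalized 2-cocycle \<open>f\<close> of \<open>G = G\<^sub>n\<^sub>,\<^sub>a\<^sub>,\<^sub>m\<close> defines a central extension \<open>E\<close> of \<open>G\<close>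
  by \<open>k\<^sup>\<times>\<close>. Since \<open>k\<close> is algebraically closed, \<open>t\<close> and \<open>\<sigma>\<close> lift to \<open>T, S \<in> E\<close> with
  \<open>T\<^sup>n = 1\<close> and \<open>S\<^sup>2 = T\<^sup>m\<close>; the relation \<open>\<sigma> t = t\<^sup>a \<sigma>\<close> then lifts to \<open>S T = \<beta> T\<^sup>a S\<close> for a
  scalar \<open>\<beta>\<close> with \<open>\<beta>\<^sup>n = \<beta>\<^sup>a\<^sup>+\<^sup>1 = \<beta>\<^sup>m = 1\<close>, and computing products of the normal forms
  \<open>T\<^sup>i S\<^sup>e\<close> shows that \<open>f\<close> is cohomologous to the standard cocycle
  \<open>c\<^sub>\<beta>(t\<^sup>i \<sigma>\<^sup>e, t\<^sup>j \<sigma>\<^sup>f) = \<beta>\<^sup>e\<^sup>j\<close>. The cocycle \<open>c\<^sub>\<beta>\<close> is a coboundary exactly when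
  \<open>\<beta>\<^sup>N = 1\<close> for \<open>N = n / d\<^sub>-\<close>. Now \<open>N\<close> divides \<open>a + 1\<close>, \<open>m\<close> and \<open>d\<^sub>+\<close>, and \<open>d\<^sub>+\<close> divides
  \<open>2 N\<close>, so \<open>\<beta>\<^sup>N = \<plusminus>1\<close>; the sign \<open>-1\<close> occurs precisely when \<open>d\<^sub>+ = 2 N\<close> divides \<open>m\<close>.
  When \<open>d\<^sub>+ = 2 N\<close>, the group is split iff \<open>d\<^sub>+\<close> divides \<open>m\<close>: if it does, an explicit change
  of coordinates \<open>t\<^sup>i \<sigma>\<^sup>e \<mapsto> t\<^sup>i\<^sup>-\<^sup>e\<^sup>j \<sigma>\<^sup>e\<close> identifies \<open>G\<close> with \<open>G\<^sub>n\<^sub>,\<^sub>a\<^sub>,\<^sub>0\<close>; if it does not, \<open>H\<^sup>2(G)\<close>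
  vanishes while \<open>H\<^sup>2(G\<^sub>n\<^sub>,\<^sub>a\<^sub>,\<^sub>0)\<close> does not.
\<close>

lemma power_eq_one_mod_cong:
  fixes b :: "'a::monoid_mult"
  assumes "b ^ n = 1" and "k mod n = k' mod n"
  shows "b ^ k = b ^ k'"
proof -
  have reduce: "b ^ j = b ^ (j mod n)" for j
  proof -
    have "b ^ j = b ^ (n * (j div n) + j mod n)" by simp
    also have "\<dots> = (b ^ n) ^ (j div n) * b ^ (j mod n)" by (simp only: power_add power_mult)
    finally show ?thesis using assms(1) by simp
  qed
  show ?thesis using reduce[of k] reduce[of k'] assms(2) by simp
qed

lemma (in monoid) nat_pow_mod_cong:
  assumes "x \<in> carrier G" and "x [^] n = \<one>" and "k mod n = k' mod n"
  shows "x [^] k = x [^] (k' :: nat)"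
proof -
  have reduce: "x [^] j = x [^] (j mod n)" for j :: nat
  proof -
    have "x [^] j = x [^] (n * (j div n) + j mod n)" by simp
    also have "\<dots> = (x [^] n) [^] (j div n) \<otimes> x [^] (j mod n)"
      using assms(1) by (simp only: nat_pow_mult[symmetric] nat_pow_pow nat_pow_closed)
    finally show ?thesis using assms(1,2) by simp
  qed
  show ?thesis using reduce[of k] reduce[of k'] assms(3) by simp
qed

lemma power_eq_one_if_dvd:
  fixes b :: "'a::monoid_mult"
  assumes "b ^ p = 1" and "p dvd q"
  shows "b ^ q = 1"
  using assms by (auto simp: power_mult elim!: dvdE)

lemma power_gcd_eq_one:
  fixes b :: "'a::monoid_mult"
  assumes "b ^ p = 1" and "b ^ q = 1"
  shows "b ^ gcd p q = 1"
proof (cases "p = 0")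
  case True
  then show ?thesis using assms by simp
next
  case False
  obtain x y where xy: "p * x = q * y + gcd p q" using bezout_nat[OF False] by blast
  have "1 = (b ^ p) ^ x" using assms by simp
  also have "\<dots> = (b ^ q) ^ y * b ^ gcd p q" by (simp add: power_mult[symmetric] xy power_add)
  finally show ?thesis using assms by simp
qed

lemma alg_closed_nth_root:
  assumes "alg_closed TYPE('k::field)" and "d \<ge> 1"
  shows "\<exists>x::'k. x ^ d = c"
proof -
  let ?p = "monom (1::'k) d + [:-c:]"
  have "degree ?p = d" using assms(2) by (subst degree_add_eq_left) (auto simp: degree_monom_eq)
  then have "\<exists>x. poly ?p x = 0" using assms unfolding alg_closed_def by (metis order_refl)
  then show ?thesis by (auto simp: poly_monom)
qed

lemma (in group) iso_integer_mod_group_2: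
  assumes "carrier G = {\<one>, x}" and "x \<noteq> \<one>"
  shows "G \<cong> integer_mod_group 2"
proof -
  have x: "x \<in> carrier G" using assms(1) by simp
  have "x \<otimes> x \<noteq> x \<otimes> \<one>" using x assms(2) by (subst l_cancel) auto
  then have "x \<otimes> x \<noteq> x" using x by simp
  moreover have "x \<otimes> x \<in> {\<one>, x}" using x assms(1)[symmetric] by simp
  ultimately have xx: "x \<otimes> x = \<one>" by simp
  define \<phi> where "\<phi> y = (if y = \<one> then 0 else 1 :: int)" for y
  have "\<phi> \<in> hom G (integer_mod_group 2)"
  proof (rule homI)
    fix y z assume "y \<in> carrier G" "z \<in> carrier G"
    then have "y \<in> {\<one>, x}" "z \<in> {\<one>, x}" using assms(1) by simp_all
    then show "\<phi> (y \<otimes> z) = \<phi> y \<otimes>\<^bsub>integer_mod_group 2\<^esub> \<phi> z"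
      using x xx assms(2) by (auto simp: \<phi>_def)
  qed (auto simp: \<phi>_def carrier_integer_mod_group)
  moreover have "bij_betw \<phi> {\<one>, x} {0, 1}"
    using assms(2) by (auto simp: bij_betw_def inj_on_def \<phi>_def)
  moreover have "carrier (integer_mod_group 2) = {0, 1}"
    by (auto simp: carrier_integer_mod_group)
  ultimately show ?thesis
    using assms(1) by (auto simp: is_iso_def iso_def)
qed

lemma (in normal) FactGroup_iso_integer_mod_group_2:
  assumes c: "c \<in> carrier G" "c \<notin> H"
    and cosets: "\<And>x. x \<in> carrier G \<Longrightarrow> x \<in> H \<or> x \<in> H #> c"
  shows "G Mod H \<cong> integer_mod_group 2"
proof (rule group.iso_integer_mod_group_2)
  show "group (G Mod H)" by (rule factorgroup_is_group)
  show "carrier (G Mod H) = {\<one>\<^bsub>G Mod H\<^esub>, H #> c}"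
  proof
    show "carrier (G Mod H) \<subseteq> {\<one>\<^bsub>G Mod H\<^esub>, H #> c}"
    proof
      fix Q assume "Q \<in> carrier (G Mod H)"
      then obtain x where x: "x \<in> carrier G" and Q: "Q = H #> x"
        by (auto simp: carrier_FactGroup)
      from cosets[OF x] show "Q \<in> {\<one>\<^bsub>G Mod H\<^esub>, H #> c}"
        using Q x c(1) repr_independence coset_join2 by (auto simp: subgroup_axioms)
    qed
    show "{\<one>\<^bsub>G Mod H\<^esub>, H #> c} \<subseteq> carrier (G Mod H)"
      using c(1) subgroup_in_rcosets[OF is_group] by (auto simp: carrier_FactGroup RCOSETS_def)
  qed
  show "H #> c \<noteq> \<one>\<^bsub>G Mod H\<^esub>"
    using rcos_self[OF c(1) subgroup_axioms] c(2) by auto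
qed

section \<open>Cocycles, coboundaries and \<open>H2\<close>\<close>

lemma cocycles2I:
  assumes "\<And>x y. x \<in> carrier G \<Longrightarrow> y \<in> carrier G \<Longrightarrow> f x y \<noteq> 0"
    and "\<And>x y. x \<notin> carrier G \<or> y \<notin> carrier G \<Longrightarrow> f x y = 1"
    and "\<And>x y z. x \<in> carrier G \<Longrightarrow> y \<in> carrier G \<Longrightarrow> z \<in> carrier G \<Longrightarrow>
           f y z * f x (y \<otimes>\<^bsub>G\<^esub> z) = f (x \<otimes>\<^bsub>G\<^esub> y) z * f x y"
  shows "f \<in> cocycles2 G"
  using assms by (auto simp: cocycles2_def)

lemma cocycles2D:
  assumes "f \<in> cocycles2 G"
  shows "\<And>x y. x \<in> carrier G \<Longrightarrow> y \<in> carrier G \<Longrightarrow> f x y \<noteq> 0"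
    and "\<And>x y. x \<notin> carrier G \<or> y \<notin> carrier G \<Longrightarrow> f x y = 1"
    and "\<And>x y z. x \<in> carrier G \<Longrightarrow> y \<in> carrier G \<Longrightarrow> z \<in> carrier G \<Longrightarrow>
           f y z * f x (y \<otimes>\<^bsub>G\<^esub> z) = f (x \<otimes>\<^bsub>G\<^esub> y) z * f x y"
  using assms by (auto simp: cocycles2_def)

lemma (in group) cocycle_one_left:
  assumes "(f :: 'a \<Rightarrow> 'a \<Rightarrow> 'k::field) \<in> cocycles2 G" and "x \<in> carrier G"
  shows "f \<one> x = f \<one> \<one>"
proof -
  have "f \<one> x * f \<one> x = f \<one> x * f \<one> \<one>"
    using cocycles2D(3)[OF assms(1), of \<one> \<one> x] assms(2) by simp
  moreover have "f \<one> x \<noteq> 0" using cocycles2D(1)[OF assms(1)] assms(2) by simp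
  ultimately show ?thesis by simp
qed

lemma carrier_cocycle_group [simp]: "carrier (cocycle_group G) = cocycles2 G"
  by (simp add: cocycle_group_def)

lemma mult_cocycle_group [simp]: "f \<otimes>\<^bsub>cocycle_group G\<^esub> g = (\<lambda>x y. f x y * g x y)"
  by (simp add: cocycle_group_def)

lemma one_cocycle_group [simp]: "\<one>\<^bsub>cocycle_group G\<^esub> = (\<lambda>x y. 1)"
  by (simp add: cocycle_group_def)

lemma cocycles2_mult:
  assumes "(f :: 'g \<Rightarrow> 'g \<Rightarrow> 'k::field) \<in> cocycles2 G" and "g \<in> cocycles2 G"
  shows "(\<lambda>x y. f x y * g x y) \<in> cocycles2 G"
proof (rule cocycles2I)
  fix x y z assume xyz: "x \<in> carrier G" "y \<in> carrier G" "z \<in> carrier G"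
  show "f y z * g y z * (f x (y \<otimes>\<^bsub>G\<^esub> z) * g x (y \<otimes>\<^bsub>G\<^esub> z)) =
        f (x \<otimes>\<^bsub>G\<^esub> y) z * g (x \<otimes>\<^bsub>G\<^esub> y) z * (f x y * g x y)"
    using cocycles2D(3)[OF assms(1) xyz] cocycles2D(3)[OF assms(2) xyz]
    by (metis (no_types, lifting) mult.assoc mult.left_commute)
qed (use cocycles2D[OF assms(1)] cocycles2D[OF assms(2)] in auto)

lemma cocycles2_inverse:
  assumes "(f :: 'g \<Rightarrow> 'g \<Rightarrow> 'k::field) \<in> cocycles2 G"
  shows "(\<lambda>x y. inverse (f x y)) \<in> cocycles2 G"
proof (rule cocycles2I)
  fix x y z assume xyz: "x \<in> carrier G" "y \<in> carrier G" "z \<in> carrier G"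
  show "inverse (f y z) * inverse (f x (y \<otimes>\<^bsub>G\<^esub> z)) =
        inverse (f (x \<otimes>\<^bsub>G\<^esub> y) z) * inverse (f x y)"
    using cocycles2D(3)[OF assms xyz] by (metis inverse_mult_distrib)
qed (use cocycles2D[OF assms] in auto)

lemma inverse_mult_cocycle_eq_one:
  assumes "(f :: 'g \<Rightarrow> 'g \<Rightarrow> 'k::field) \<in> cocycles2 G"
  shows "(\<lambda>x y. inverse (f x y) * f x y) = (\<lambda>x y. 1)"
  using cocycles2D(1,2)[OF assms] by (intro ext) (metis inverse_1 left_inverse mult_1)

lemma comm_group_cocycle_group: "comm_group (cocycle_group G :: ('g \<Rightarrow> 'g \<Rightarrow> 'k::field) monoid)"
proof (rule comm_groupI)
  fix f :: "'g \<Rightarrow> 'g \<Rightarrow> 'k" assume "f \<in> carrier (cocycle_group G)"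
  then show "\<exists>g\<in>carrier (cocycle_group G). g \<otimes>\<^bsub>cocycle_group G\<^esub> f = \<one>\<^bsub>cocycle_group G\<^esub>"
    using cocycles2_inverse inverse_mult_cocycle_eq_one by fastforce
qed (auto simp: cocycles2_def cocycles2_mult mult_ac)

lemma inv_cocycle_group:
  assumes "(f :: 'g \<Rightarrow> 'g \<Rightarrow> 'k::field) \<in> cocycles2 G"
  shows "inv\<^bsub>cocycle_group G\<^esub> f = (\<lambda>x y. inverse (f x y))"
proof -
  interpret comm_group "cocycle_group G :: ('g \<Rightarrow> 'g \<Rightarrow> 'k) monoid"
    by (rule comm_group_cocycle_group)
  show ?thesis
    using assms by (intro inv_equality) (simp_all add: cocycles2_inverse inverse_mult_cocycle_eq_one)
qed

lemma (in group) coboundaries2_subset_cocycles2: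
  "(coboundaries2 G :: ('a \<Rightarrow> 'a \<Rightarrow> 'k::field) set) \<subseteq> cocycles2 G"
proof
  fix f :: "'a \<Rightarrow> 'a \<Rightarrow> 'k" assume "f \<in> coboundaries2 G"
  then obtain h where h: "\<forall>x\<in>carrier G. h x \<noteq> 0"
    "\<And>x y. f x y = (if x \<in> carrier G \<and> y \<in> carrier G then h y * inverse (h (x \<otimes> y)) * h x else 1)"
    unfolding coboundaries2_def by blast
  show "f \<in> cocycles2 G"
  proof (rule cocycles2I)
    fix x y z assume xyz: "x \<in> carrier G" "y \<in> carrier G" "z \<in> carrier G"
    then have "h x \<noteq> 0" "h y \<noteq> 0" "h z \<noteq> 0" "h (x \<otimes> y) \<noteq> 0" "h (y \<otimes> z) \<noteq> 0"
      "h (x \<otimes> y \<otimes> z) \<noteq> 0" using h(1) by auto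
    then show "f y z * f x (y \<otimes> z) = f (x \<otimes> y) z * f x y"
      using xyz by (simp add: h(2) m_assoc field_simps)
  qed (use h in auto)
qed

lemma subgroup_coboundaries2:
  assumes "group G"
  shows "subgroup (coboundaries2 G) (cocycle_group G :: ('g \<Rightarrow> 'g \<Rightarrow> 'k::field) monoid)"
proof -
  interpret comm_group "cocycle_group G :: ('g \<Rightarrow> 'g \<Rightarrow> 'k) monoid"
    by (rule comm_group_cocycle_group)
  show ?thesis
  proof (rule subgroupI)
    show "coboundaries2 G \<subseteq> carrier (cocycle_group G :: ('g \<Rightarrow> 'g \<Rightarrow> 'k) monoid)"
      using group.coboundaries2_subset_cocycles2[OF assms] by simp
    have "(\<lambda>x y. 1) \<in> (coboundaries2 G :: ('g \<Rightarrow> 'g \<Rightarrow> 'k) set)"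
      unfolding coboundaries2_def by (rule CollectI, rule exI[of _ "\<lambda>x. 1"]) simp
    then show "(coboundaries2 G :: ('g \<Rightarrow> 'g \<Rightarrow> 'k) set) \<noteq> {}" by blast
  next
    fix f :: "'g \<Rightarrow> 'g \<Rightarrow> 'k" assume f: "f \<in> coboundaries2 G"
    then obtain h where h: "\<forall>x\<in>carrier G. h x \<noteq> 0"
      "\<And>x y. f x y = (if x \<in> carrier G \<and> y \<in> carrier G then h y * inverse (h (x \<otimes>\<^bsub>G\<^esub> y)) * h x else 1)"
      unfolding coboundaries2_def by blast
    have "(\<lambda>x y. inverse (f x y)) \<in> (coboundaries2 G :: ('g \<Rightarrow> 'g \<Rightarrow> 'k) set)"
      unfolding coboundaries2_def
      by (rule CollectI, rule exI[of _ "\<lambda>x. inverse (h x)"]) (use h in \<open>auto simp: field_simps\<close>)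
    then show "inv\<^bsub>cocycle_group G\<^esub> f \<in> coboundaries2 G"
      using inv_cocycle_group[of f G] f group.coboundaries2_subset_cocycles2[OF assms] by auto
  next
    fix f g :: "'g \<Rightarrow> 'g \<Rightarrow> 'k" assume "f \<in> coboundaries2 G" and "g \<in> coboundaries2 G"
    then obtain h k where h: "\<forall>x\<in>carrier G. h x \<noteq> 0"
      "\<And>x y. f x y = (if x \<in> carrier G \<and> y \<in> carrier G then h y * inverse (h (x \<otimes>\<^bsub>G\<^esub> y)) * h x else 1)"
      and k: "\<forall>x\<in>carrier G. k x \<noteq> 0"
      "\<And>x y. g x y = (if x \<in> carrier G \<and> y \<in> carrier G then k y * inverse (k (x \<otimes>\<^bsub>G\<^esub> y)) * k x else 1)"
      unfolding coboundaries2_def by blast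
    have "(\<lambda>x y. f x y * g x y) \<in> (coboundaries2 G :: ('g \<Rightarrow> 'g \<Rightarrow> 'k) set)"
      unfolding coboundaries2_def
      by (rule CollectI, rule exI[of _ "\<lambda>x. h x * k x"]) (use h k in \<open>auto simp: field_simps\<close>)
    then show "f \<otimes>\<^bsub>cocycle_group G\<^esub> g \<in> coboundaries2 G" by simp
  qed
qed

lemma normal_coboundaries2:
  assumes "group G"
  shows "coboundaries2 G \<lhd> (cocycle_group G :: ('g \<Rightarrow> 'g \<Rightarrow> 'k::field) monoid)"
  by (rule comm_group.subgroup_imp_normal[OF comm_group_cocycle_group subgroup_coboundaries2[OF assms]])

lemma trivial_H2I:
  fixes G :: "('g, 'b) monoid_scheme"
  assumes "group G" and "(cocycles2 G :: ('g \<Rightarrow> 'g \<Rightarrow> 'k::field) set) \<subseteq> coboundaries2 G"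
  shows "trivial_group (H2 G TYPE('k))"
proof -
  interpret N: normal "coboundaries2 G" "cocycle_group G :: ('g \<Rightarrow> 'g \<Rightarrow> 'k) monoid"
    by (rule normal_coboundaries2[OF assms(1)])
  have "carrier (H2 G TYPE('k)) = {coboundaries2 G}"
    using assms(2) N.coset_join2[OF _ N.subgroup_axioms] N.one_closed
    by (auto simp: H2_def carrier_FactGroup)
  then show ?thesis
    using group.trivial_group N.factorgroup_is_group by (metis H2_def)
qed

lemma H2_iso_integer_mod_group_2I:
  fixes G :: "('g, 'b) monoid_scheme" and c :: "'g \<Rightarrow> 'g \<Rightarrow> 'k::field"
  assumes "group G" and "c \<in> cocycles2 G" and "c \<notin> coboundaries2 G"
    and "\<And>f. f \<in> cocycles2 G \<Longrightarrow> f \<in> coboundaries2 G \<or> f \<in> coboundaries2 G #>\<^bsub>cocycle_group G\<^esub> c"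
  shows "H2 G TYPE('k) \<cong> integer_mod_group 2"
  unfolding H2_def
  by (rule normal.FactGroup_iso_integer_mod_group_2[OF normal_coboundaries2[OF assms(1)]])
    (use assms(2-) in auto)

lemma cocycles2_pullback:
  assumes "group G" and "\<phi> \<in> hom G H" and "(f :: 'h \<Rightarrow> 'h \<Rightarrow> 'k::field) \<in> cocycles2 H"
  shows "(\<lambda>x y. if x \<in> carrier G \<and> y \<in> carrier G then f (\<phi> x) (\<phi> y) else 1) \<in> cocycles2 G"
proof (rule cocycles2I)
  fix x y z assume "x \<in> carrier G" "y \<in> carrier G" "z \<in> carrier G"
  moreover have "\<phi> x \<in> carrier H" "\<phi> y \<in> carrier H" "\<phi> z \<in> carrier H"
    using calculation assms(2) by (auto simp: hom_def)
  ultimately show "(if y \<in> carrier G \<and> z \<in> carrier G then f (\<phi> y) (\<phi> z) else 1) *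
      (if x \<in> carrier G \<and> y \<otimes>\<^bsub>G\<^esub> z \<in> carrier G then f (\<phi> x) (\<phi> (y \<otimes>\<^bsub>G\<^esub> z)) else 1) =
      (if x \<otimes>\<^bsub>G\<^esub> y \<in> carrier G \<and> z \<in> carrier G then f (\<phi> (x \<otimes>\<^bsub>G\<^esub> y)) (\<phi> z) else 1) *
      (if x \<in> carrier G \<and> y \<in> carrier G then f (\<phi> x) (\<phi> y) else 1)"
    using cocycles2D(3)[OF assms(3)] assms(2) group.subgroup_self[OF assms(1)]
    by (simp add: hom_def subgroup.m_closed)
qed (use assms cocycles2D(1)[OF assms(3)] in \<open>auto simp: hom_def\<close>)

lemma coboundaries2_of_pullback:
  assumes "group G" and iso: "\<phi> \<in> iso G H" and f: "(f :: 'h \<Rightarrow> 'h \<Rightarrow> 'k::field) \<in> cocycles2 H"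
    and pullback: "(\<lambda>x y. if x \<in> carrier G \<and> y \<in> carrier G then f (\<phi> x) (\<phi> y) else 1)
      \<in> coboundaries2 G"
  shows "f \<in> coboundaries2 H"
proof -
  interpret G: group G by (rule assms(1))
  obtain h where hnz: "\<forall>x\<in>carrier G. h x \<noteq> 0" and
    hf': "\<forall>x y. (if x \<in> carrier G \<and> y \<in> carrier G then f (\<phi> x) (\<phi> y) else 1) =
      (if x \<in> carrier G \<and> y \<in> carrier G then h y * inverse (h (x \<otimes>\<^bsub>G\<^esub> y)) * h x else 1)"
    using pullback unfolding coboundaries2_def by blast
  have hf: "f (\<phi> x) (\<phi> y) = h y * inverse (h (x \<otimes>\<^bsub>G\<^esub> y)) * h x"
    if "x \<in> carrier G" "y \<in> carrier G" for x y
    using hf'[rule_format, of x y] that by simp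
  have hom: "\<phi> \<in> hom G H" and bij: "bij_betw \<phi> (carrier G) (carrier H)"
    using iso by (auto simp: iso_def)
  define \<psi> where "\<psi> = inv_into (carrier G) \<phi>"
  have \<psi>_closed: "\<psi> u \<in> carrier G" if "u \<in> carrier H" for u
    using that bij by (simp add: \<psi>_def bij_betw_def inv_into_into)
  have \<phi>_\<psi>: "\<phi> (\<psi> u) = u" if "u \<in> carrier H" for u
    using that bij by (simp add: \<psi>_def bij_betw_def f_inv_into_f)
  have \<psi>_mult: "\<psi> (u \<otimes>\<^bsub>H\<^esub> v) = \<psi> u \<otimes>\<^bsub>G\<^esub> \<psi> v" if "u \<in> carrier H" "v \<in> carrier H" for u v
  proof -
    have "\<phi> (\<psi> u \<otimes>\<^bsub>G\<^esub> \<psi> v) = u \<otimes>\<^bsub>H\<^esub> v"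
      using that hom \<psi>_closed \<phi>_\<psi> by (simp add: hom_def)
    moreover have "inj_on \<phi> (carrier G)" using bij by (simp add: bij_betw_def)
    ultimately show ?thesis
      using that \<psi>_closed unfolding \<psi>_def by (metis G.m_closed inv_into_f_f)
  qed
  show ?thesis
    unfolding coboundaries2_def
  proof (intro CollectI exI conjI allI)
    show "\<forall>u\<in>carrier H. h (\<psi> u) \<noteq> 0" using hnz \<psi>_closed by blast
    fix u v
    show "f u v = (if u \<in> carrier H \<and> v \<in> carrier H
        then h (\<psi> v) * inverse (h (\<psi> (u \<otimes>\<^bsub>H\<^esub> v))) * h (\<psi> u) else 1)"
      using hf[OF \<psi>_closed \<psi>_closed] \<phi>_\<psi> \<psi>_mult cocycles2D(2)[OF f] by auto
  qed
qed

lemma iso_cocycles2_subset_coboundaries2: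
  assumes "group G" and "G \<cong> H"
    and "(cocycles2 G :: ('g \<Rightarrow> 'g \<Rightarrow> 'k::field) set) \<subseteq> coboundaries2 G"
  shows "(cocycles2 H :: ('h \<Rightarrow> 'h \<Rightarrow> 'k) set) \<subseteq> coboundaries2 H"
proof
  fix f :: "'h \<Rightarrow> 'h \<Rightarrow> 'k" assume f: "f \<in> cocycles2 H"
  obtain \<phi> where \<phi>: "\<phi> \<in> iso G H" using assms(2) by (auto simp: is_iso_def)
  then have "\<phi> \<in> hom G H" by (simp add: iso_def)
  then have "(\<lambda>x y. if x \<in> carrier G \<and> y \<in> carrier G then f (\<phi> x) (\<phi> y) else 1)
      \<in> coboundaries2 G"
    using cocycles2_pullback[OF assms(1)] f assms(3) by blast
  then show "f \<in> coboundaries2 H" by (rule coboundaries2_of_pullback[OF assms(1) \<phi> f])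
qed

section \<open>The central extension defined by a cocycle\<close>

definition central_extension ::
    "('g, 'b) monoid_scheme \<Rightarrow> ('g \<Rightarrow> 'g \<Rightarrow> 'k::field) \<Rightarrow> ('k \<times> 'g) monoid" where
  "central_extension G f = \<lparr> carrier = {p. fst p \<noteq> 0 \<and> snd p \<in> carrier G},
     monoid.mult = (\<lambda>p q. (fst p * fst q * f (snd p) (snd q), snd p \<otimes>\<^bsub>G\<^esub> snd q)),
     one = (inverse (f \<one>\<^bsub>G\<^esub> \<one>\<^bsub>G\<^esub>), \<one>\<^bsub>G\<^esub>) \<rparr>"

definition scale_fst :: "'k::monoid_mult \<Rightarrow> 'k \<times> 'g \<Rightarrow> 'k \<times> 'g" where
  "scale_fst c p = (c * fst p, snd p)"

locale cocycle_extension = group G for G :: "('g, 'b) monoid_scheme" (structure) +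
  fixes f :: "'g \<Rightarrow> 'g \<Rightarrow> 'k::field"
  assumes cocycle: "f \<in> cocycles2 G"
begin

abbreviation "E \<equiv> central_extension G f"

lemma cocycle_nonzero: "x \<in> carrier G \<Longrightarrow> y \<in> carrier G \<Longrightarrow> f x y \<noteq> 0"
  using cocycles2D(1)[OF cocycle] by blast

lemma carrier_E: "p \<in> carrier E \<longleftrightarrow> fst p \<noteq> 0 \<and> snd p \<in> carrier G"
  by (simp add: central_extension_def)

lemma mult_E: "p \<otimes>\<^bsub>E\<^esub> q = (fst p * fst q * f (snd p) (snd q), snd p \<otimes> snd q)"
  by (simp add: central_extension_def)

lemma one_E: "\<one>\<^bsub>E\<^esub> = (inverse (f \<one> \<one>), \<one>)"
  by (simp add: central_extension_def)

lemma group_E: "group E"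
proof (rule groupI)
  fix x y assume "x \<in> carrier E" "y \<in> carrier E"
  then show "x \<otimes>\<^bsub>E\<^esub> y \<in> carrier E" by (simp add: carrier_E mult_E cocycle_nonzero)
next
  show "\<one>\<^bsub>E\<^esub> \<in> carrier E" by (simp add: carrier_E one_E cocycle_nonzero)
next
  fix x y z assume "x \<in> carrier E" "y \<in> carrier E" "z \<in> carrier E"
  then show "x \<otimes>\<^bsub>E\<^esub> y \<otimes>\<^bsub>E\<^esub> z = x \<otimes>\<^bsub>E\<^esub> (y \<otimes>\<^bsub>E\<^esub> z)"
    using cocycles2D(3)[OF cocycle, of "snd x" "snd y" "snd z"]
    by (simp add: carrier_E mult_E m_assoc)
next
  fix x assume "x \<in> carrier E"
  then show "\<one>\<^bsub>E\<^esub> \<otimes>\<^bsub>E\<^esub> x = x"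
    using cocycle_one_left[OF cocycle, of "snd x"] cocycle_nonzero[of \<one> \<one>]
    by (cases x) (simp add: carrier_E mult_E one_E)
next
  fix x assume x: "x \<in> carrier E"
  define y where "y = (inverse (fst x * f (inv (snd x)) (snd x) * f \<one> \<one>), inv (snd x))"
  have "y \<in> carrier E" using x cocycle_nonzero by (simp add: y_def carrier_E)
  moreover have "y \<otimes>\<^bsub>E\<^esub> x = \<one>\<^bsub>E\<^esub>"
    using x cocycle_nonzero[of "inv (snd x)" "snd x"] cocycle_nonzero[of \<one> \<one>]
    by (simp add: y_def carrier_E mult_E one_E field_simps)
  ultimately show "\<exists>y\<in>carrier E. y \<otimes>\<^bsub>E\<^esub> x = \<one>\<^bsub>E\<^esub>" by blast
qed

sublocale E: group E by (rule group_E)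

lemma scale_fst_closed: "c \<noteq> 0 \<Longrightarrow> p \<in> carrier E \<Longrightarrow> scale_fst c p \<in> carrier E"
  by (simp add: scale_fst_def carrier_E)

lemma scale_fst_mult_left: "scale_fst c p \<otimes>\<^bsub>E\<^esub> q = scale_fst c (p \<otimes>\<^bsub>E\<^esub> q)"
  by (simp add: scale_fst_def mult_E mult_ac)

lemma scale_fst_mult_right: "p \<otimes>\<^bsub>E\<^esub> scale_fst c q = scale_fst c (p \<otimes>\<^bsub>E\<^esub> q)"
  by (simp add: scale_fst_def mult_E mult_ac)

lemma scale_fst_scale_fst: "scale_fst c (scale_fst d p) = scale_fst (c * d) p"
  by (simp add: scale_fst_def mult_ac)

lemma scale_fst_1: "scale_fst 1 p = p"
  by (simp add: scale_fst_def)

lemma scale_fst_pow: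
  "p \<in> carrier E \<Longrightarrow> scale_fst c p [^]\<^bsub>E\<^esub> (k::nat) = scale_fst (c ^ k) (p [^]\<^bsub>E\<^esub> k)"
  by (induction k) (simp_all add: scale_fst_1 scale_fst_mult_left scale_fst_mult_right
      scale_fst_scale_fst mult_ac)

lemma scale_fst_eq_selfD: "p \<in> carrier E \<Longrightarrow> scale_fst c p = p \<Longrightarrow> c = 1"
  by (cases p) (simp add: scale_fst_def carrier_E)

lemma snd_mult_E: "snd (p \<otimes>\<^bsub>E\<^esub> q) = snd p \<otimes> snd q"
  by (simp add: mult_E)

lemma snd_pow_E: "p \<in> carrier E \<Longrightarrow> snd (p [^]\<^bsub>E\<^esub> (k::nat)) = snd p [^] k"
  by (induction k) (simp_all add: one_E snd_mult_E)

lemma eq_scale_fst_if_snd_eq: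
  "p \<in> carrier E \<Longrightarrow> q \<in> carrier E \<Longrightarrow> snd p = snd q \<Longrightarrow> p = scale_fst (fst p / fst q) q"
  by (cases p, cases q) (simp add: scale_fst_def carrier_E)

lemma exists_lift_pow_eq:
  fixes d :: nat
  assumes "alg_closed TYPE('k)" and "d \<ge> 1"
    and p: "p \<in> carrier E" and q: "q \<in> carrier E" and "snd (p [^]\<^bsub>E\<^esub> d) = snd q"
  shows "\<exists>p'\<in>carrier E. snd p' = snd p \<and> p' [^]\<^bsub>E\<^esub> d = q"
proof -
  define c where "c = fst (p [^]\<^bsub>E\<^esub> d) / fst q"
  have pd: "p [^]\<^bsub>E\<^esub> d = scale_fst c q"
    using eq_scale_fst_if_snd_eq[of "p [^]\<^bsub>E\<^esub> d" q] E.nat_pow_closed p q assms(5) by (simp add: c_def)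
  have "c \<noteq> 0" using E.nat_pow_closed[OF p, of d] q by (simp add: c_def carrier_E)
  obtain r where r: "r ^ d = inverse c" using alg_closed_nth_root[OF assms(1,2)] by blast
  with \<open>c \<noteq> 0\<close> have "r \<noteq> 0" using assms(2) by (auto simp: power_0_left)
  show ?thesis
  proof (intro bexI conjI)
    show "scale_fst r p \<in> carrier E" using \<open>r \<noteq> 0\<close> p by (rule scale_fst_closed)
    show "snd (scale_fst r p) = snd p" by (simp add: scale_fst_def)
    show "scale_fst r p [^]\<^bsub>E\<^esub> d = q"
      using p pd r \<open>c \<noteq> 0\<close> by (simp add: scale_fst_pow scale_fst_scale_fst scale_fst_1)
  qed
qed

lemma cocycle_eq_coboundary_mult_if_section:
  assumes lift: "\<And>g. g \<in> carrier G \<Longrightarrow> s g \<in> carrier E \<and> snd (s g) = g"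
    and mult: "\<And>g h. g \<in> carrier G \<Longrightarrow> h \<in> carrier G \<Longrightarrow>
      s g \<otimes>\<^bsub>E\<^esub> s h = scale_fst (c g h) (s (g \<otimes> h))"
    and c_ext: "\<And>g h. g \<notin> carrier G \<or> h \<notin> carrier G \<Longrightarrow> c g h = 1"
  shows "\<exists>b\<in>coboundaries2 G. f = (\<lambda>x y. b x y * c x y)"
proof
  define k where "k g = fst (s g)" for g
  have k_nonzero: "k g \<noteq> 0" if "g \<in> carrier G" for g
    using lift[OF that] by (simp add: k_def carrier_E)
  define b where "b x y = (if x \<in> carrier G \<and> y \<in> carrier G
      then inverse (k y) * k (x \<otimes> y) * inverse (k x) else 1)" for x y
  show "b \<in> coboundaries2 G"
    unfolding coboundaries2_def
    by (rule CollectI, rule exI[of _ "\<lambda>x. inverse (k x)"]) (simp add: k_nonzero b_def)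
  show "f = (\<lambda>x y. b x y * c x y)"
  proof (intro ext)
    fix x y
    show "f x y = b x y * c x y"
    proof (cases "x \<in> carrier G \<and> y \<in> carrier G")
      case True
      then have "s x = (k x, x)" "s y = (k y, y)" "s (x \<otimes> y) = (k (x \<otimes> y), x \<otimes> y)"
        using lift by (auto simp: k_def prod_eq_iff)
      then have "k x * k y * f x y = c x y * k (x \<otimes> y)"
        using arg_cong[OF mult[of x y], of fst] True by (simp add: mult_E scale_fst_def)
      then show ?thesis using True k_nonzero by (simp add: b_def field_simps)
    next
      case False
      then show ?thesis using cocycles2D(2)[OF cocycle] c_ext by (auto simp: b_def)
    qed
  qed
qed

end

section \<open>The groups \<open>G\<^sub>n\<^sub>,\<^sub>a\<^sub>,\<^sub>m\<close>\<close>

lemma Gnam_mult_mod_left: "Gnam_mult n a m (i mod int n, e) y = Gnam_mult n a m (i, e) y"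
  by (simp add: Gnam_mult_def add.assoc mod_add_left_eq)

lemma Gnam_mult_mod_right: "Gnam_mult n a m x (j mod int n, f) = Gnam_mult n a m x (j, f)"
  unfolding Gnam_mult_def fst_conv snd_conv
  by (rule arg_cong2[where f = Pair], intro mod_add_cong mod_mult_cong) simp_all

locale gnam =
  fixes n :: nat and a m :: int
  assumes n_pos: "n \<ge> 1"
    and a_square: "a ^ 2 mod int n = 1 mod int n"
    and a_m: "((1 - a) * m) mod int n = 0"
begin

abbreviation "G \<equiv> Gnam n a m"

lemma carrier_G: "carrier G = {0..<int n} \<times> {0, 1}"
  by (simp add: Gnam_def Gnam_carrier_def)

lemma mult_G: "x \<otimes>\<^bsub>G\<^esub> y = Gnam_mult n a m x y"
  by (simp add: Gnam_def)

lemma one_G: "\<one>\<^bsub>G\<^esub> = (0, 0)"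
  by (simp add: Gnam_def)

lemma n_dvd_a_square_minus_1: "int n dvd a * a - 1"
  using a_square by (simp add: mod_eq_dvd_iff power2_eq_square)

lemma n_dvd_m_minus_a_m: "int n dvd m - a * m"
  using a_m by (simp add: dvd_eq_mod_eq_0 algebra_simps)

lemma Gnam_mult_assoc:
  assumes "e = 0 \<or> e = 1" "f = 0 \<or> f = 1" "g = 0 \<or> g = 1"
  shows "Gnam_mult n a m (Gnam_mult n a m (i, e) (j, f)) (k mod int n, g)
    = Gnam_mult n a m (i mod int n, e) (Gnam_mult n a m (j, f) (k, g))"
proof -
  have "int n dvd k - a * (a * k)"
    using dvd_mult2[OF n_dvd_a_square_minus_1, of "- k"] by (simp add: algebra_simps)
  moreover have "int n dvd (k - a * (a * k)) + (m - a * m)"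
    using calculation n_dvd_m_minus_a_m by (rule dvd_add)
  ultimately show ?thesis
    unfolding Gnam_mult_def[of n a m "(i, e)" "(j, f)"] Gnam_mult_def[of n a m "(j, f)" "(k, g)"]
    using assms
    by (simp only: fst_conv snd_conv Gnam_mult_mod_left Gnam_mult_mod_right)
      (elim disjE; simp add: Gnam_mult_def mod_eq_dvd_iff ring_distribs; simp add: algebra_simps)
qed

lemma group_G: "group G"
proof (rule groupI)
  fix x y assume "x \<in> carrier G" "y \<in> carrier G"
  then show "x \<otimes>\<^bsub>G\<^esub> y \<in> carrier G"
    using n_pos by (auto simp: carrier_G mult_G Gnam_mult_def)
next
  show "\<one>\<^bsub>G\<^esub> \<in> carrier G" using n_pos by (simp add: one_G carrier_G)
next
  fix x y z assume "x \<in> carrier G" "y \<in> carrier G" "z \<in> carrier G"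
  then show "x \<otimes>\<^bsub>G\<^esub> y \<otimes>\<^bsub>G\<^esub> z = x \<otimes>\<^bsub>G\<^esub> (y \<otimes>\<^bsub>G\<^esub> z)"
    using Gnam_mult_assoc[of "snd x" "snd y" "snd z" "fst x" "fst y" "fst z"]
    by (auto simp: carrier_G mult_G)
next
  fix x assume "x \<in> carrier G"
  then show "\<one>\<^bsub>G\<^esub> \<otimes>\<^bsub>G\<^esub> x = x"
    by (auto simp: mult_G one_G Gnam_mult_def carrier_G)
next
  fix x assume "x \<in> carrier G"
  then obtain i e where x: "x = (i, e)" "0 \<le> i" "i < int n" "e = 0 \<or> e = 1"
    by (auto simp: carrier_G)
  define y where "y = (if e = 0 then ((- i) mod int n, 0) else ((- a * i - m) mod int n, 1::int))"
  have "y \<in> carrier G" using n_pos by (simp add: y_def carrier_G)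
  moreover have "y \<otimes>\<^bsub>G\<^esub> x = \<one>\<^bsub>G\<^esub>"
    using x by (auto simp: y_def mult_G one_G Gnam_mult_def add.assoc mod_add_left_eq)
  ultimately show "\<exists>y\<in>carrier G. y \<otimes>\<^bsub>G\<^esub> x = \<one>\<^bsub>G\<^esub>" by blast
qed

sublocale G: group G by (rule group_G)

lemma carrier_G_cases:
  assumes "x \<in> carrier G"
  obtains I e where "x = (int I, e)" "I < n" "e = 0 \<or> e = 1"
proof -
  obtain i e where "x = (i, e)" "0 \<le> i" "i < int n" "e = 0 \<or> e = 1"
    using assms by (cases x) (auto simp: carrier_G)
  then show thesis using that[of "nat i" e] by auto
qed

lemma mult_G_simps:
  "f = 0 \<or> f = 1 \<Longrightarrow> (i, 0) \<otimes>\<^bsub>G\<^esub> (j, f) = ((i + j) mod int n, f)"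
  "(i, 1) \<otimes>\<^bsub>G\<^esub> (j, 0) = ((i + a * j) mod int n, 1)"
  "(i, 1) \<otimes>\<^bsub>G\<^esub> (j, 1) = ((i + a * j + m) mod int n, 0)"
  by (auto simp: mult_G Gnam_mult_def)

definition t :: "int \<times> int" where "t = (1 mod int n, 0)"

definition \<sigma> :: "int \<times> int" where "\<sigma> = (0, 1)"

lemma t_closed: "t \<in> carrier G" and \<sigma>_closed: "\<sigma> \<in> carrier G"
  using n_pos by (simp_all add: t_def \<sigma>_def carrier_G)

lemma t_pow: "t [^]\<^bsub>G\<^esub> (k::nat) = (int k mod int n, 0)"
  by (induction k) (simp_all add: one_G t_def mult_G_simps mod_simps add.commute)

lemma t_pow_\<sigma>_pow: "(i, e) \<in> carrier G \<Longrightarrow> t [^]\<^bsub>G\<^esub> nat i \<otimes>\<^bsub>G\<^esub> \<sigma> [^]\<^bsub>G\<^esub> nat e = (i, e)"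
  by (auto simp: carrier_G t_pow \<sigma>_def one_G mult_G_simps)

lemma \<sigma>_t: "\<sigma> \<otimes>\<^bsub>G\<^esub> t = (a mod int n, 1)"
  by (simp add: \<sigma>_def t_def mult_G_simps mod_mult_right_eq)

definition a_nat :: nat where "a_nat = nat (a mod int n)"

definition m_nat :: nat where "m_nat = nat (m mod int n)"

lemma int_a_nat: "int a_nat = a mod int n"
  using n_pos by (simp add: a_nat_def)

lemma int_m_nat: "int m_nat = m mod int n"
  using n_pos by (simp add: m_nat_def)

lemma int_a_nat_mult_a_nat_mod: "int (a_nat * a_nat) mod int n = int 1 mod int n"
proof -
  have "int (a_nat * a_nat) mod int n = (a * a) mod int n" by (simp add: int_a_nat mod_mult_eq)
  also have "\<dots> = int 1 mod int n" using n_dvd_a_square_minus_1 by (simp add: mod_eq_dvd_iff)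
  finally show ?thesis .
qed

lemma int_a_nat_mult_m_nat_mod: "int (a_nat * m_nat) mod int n = int m_nat mod int n"
proof -
  have "int (a_nat * m_nat) mod int n = (a * m) mod int n"
    by (simp add: int_a_nat int_m_nat mod_mult_eq)
  also have "\<dots> = m mod int n"
    using n_dvd_m_minus_a_m by (simp add: mod_eq_dvd_iff dvd_diff_commute)
  finally show ?thesis by (simp add: int_m_nat)
qed

definition d_minus :: int where "d_minus = gcd (a - 1) (int n)"

definition d_plus :: int where "d_plus = gcd (a + 1) (int n)"

definition N :: nat where "N = n div nat d_minus"

lemma d_minus_pos: "d_minus > 0" and d_plus_pos: "d_plus > 0"
  using n_pos by (simp_all add: d_minus_def d_plus_def)

lemma N_mult_d_minus: "int N * d_minus = int n"
proof -
  have "nat d_minus dvd n"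
    using d_minus_pos by (metis d_minus_def gcd_dvd2 int_dvd_int_iff int_nat_eq less_le)
  then show ?thesis
    using d_minus_pos by (metis N_def dvd_mult_div_cancel int_nat_eq mult.commute of_nat_mult less_le)
qed

lemma N_pos: "N \<ge> 1"
  using N_mult_d_minus n_pos by (cases N) auto

lemma n_dvd_a_minus_1_mult_N: "int n dvd (a - 1) * int N"
proof -
  obtain k where k: "a - 1 = d_minus * k" using d_minus_def by (metis gcd_dvd1 dvdE)
  have "(a - 1) * int N = k * (int N * d_minus)" by (simp add: k ac_simps)
  then show ?thesis by (simp add: N_mult_d_minus)
qed

lemma N_dvd_a_plus_1_and_m: "int N dvd a + 1" "int N dvd m"
proof -
  obtain k where k: "a - 1 = d_minus * k" using d_minus_def by (metis gcd_dvd1 dvdE)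
  have "coprime ((a - 1) div d_minus) (int n div d_minus)"
    unfolding d_minus_def by (rule div_gcd_coprime) (use n_pos in simp)
  moreover have "(a - 1) div d_minus = k" "int n div d_minus = int N"
    using d_minus_pos k N_mult_d_minus[symmetric] by simp_all
  ultimately have coprime: "coprime (int N) k" by (simp add: coprime_commute)
  have n_eq: "int n = d_minus * int N" using N_mult_d_minus by (simp add: mult.commute)
  have "a * a - 1 = (a - 1) * (a + 1)" by (simp add: algebra_simps)
  then have "a * a - 1 = d_minus * (k * (a + 1))" by (simp add: k)
  then have "d_minus * int N dvd d_minus * (k * (a + 1))"
    using n_dvd_a_square_minus_1 by (simp add: n_eq)
  then show "int N dvd a + 1"
    using d_minus_pos coprime by (simp add: coprime_dvd_mult_right_iff)
  have "a * m - m = (a - 1) * m" by (simp add: algebra_simps)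
  then have "a * m - m = d_minus * (k * m)" by (simp add: k)
  moreover have "int n dvd a * m - m"
    using n_dvd_m_minus_a_m dvd_minus_iff[of "int n" "m - a * m"] by simp
  ultimately have "d_minus * int N dvd d_minus * (k * m)" by (simp add: n_eq)
  then show "int N dvd m"
    using d_minus_pos coprime by (simp add: coprime_dvd_mult_right_iff)
qed

lemma d_plus_eq_N_or_2N: "d_plus = int N \<or> d_plus = 2 * int N"
proof -
  have "int N dvd d_plus"
    unfolding d_plus_def using N_dvd_a_plus_1_and_m(1) N_mult_d_minus
    by (metis dvd_triv_left gcd_greatest)
  then obtain k where k: "d_plus = int N * k" by (rule dvdE)
  have "gcd d_minus d_plus dvd (a + 1) - (a - 1)"
    unfolding d_minus_def d_plus_def by (meson dvd_diff dvd_trans gcd_dvd1 gcd_dvd2)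
  then have "gcd d_minus d_plus dvd 2" by simp
  moreover have "lcm d_minus d_plus dvd int n" by (simp add: d_minus_def d_plus_def)
  ultimately have "gcd d_minus d_plus * lcm d_minus d_plus dvd 2 * int n" by (rule mult_dvd_mono)
  then have "d_minus * (int N * k) dvd d_minus * (int N * 2)"
    using prod_gcd_lcm_int[of d_minus d_plus] d_minus_pos d_plus_pos N_mult_d_minus k
    by (simp add: algebra_simps)
  then have "k dvd 2" using d_minus_pos N_pos by simp
  moreover have "k > 0" using k d_plus_pos N_pos by (simp add: zero_less_mult_iff)
  ultimately have "k = 1 \<or> k = 2" using zdvd_imp_le[of k 2] by linarith
  then show ?thesis using k by auto
qed

lemma d_minus_mult_d_plus_eq_iff:
  "d_minus * d_plus = int n \<longleftrightarrow> d_plus = int N"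
  "d_minus * d_plus = 2 * int n \<longleftrightarrow> d_plus = 2 * int N"
proof -
  have n_eq: "int n = d_minus * int N" using N_mult_d_minus by (simp add: mult.commute)
  show "d_minus * d_plus = int n \<longleftrightarrow> d_plus = int N"
    using d_minus_pos by (simp add: n_eq)
  show "d_minus * d_plus = 2 * int n \<longleftrightarrow> d_plus = 2 * int N"
    using d_minus_pos by (simp add: n_eq mult.left_commute[of 2])
qed

lemma int_gcd_Suc_a_nat: "int (gcd (Suc a_nat) n) = d_plus"
proof -
  have "int (gcd (Suc a_nat) n) = gcd (1 + a mod int n) (int n)"
    by (simp add: gcd_int_int_eq[symmetric] int_a_nat[symmetric])
  also have "\<dots> = gcd (int n) ((1 + a mod int n) mod int n)"
    by (simp add: gcd.commute gcd_red_int[symmetric])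
  also have "(1 + a mod int n) mod int n = (a + 1) mod int n"
    by (simp add: mod_simps add.commute)
  also have "gcd (int n) ((a + 1) mod int n) = d_plus"
    by (simp add: d_plus_def gcd.commute gcd_red_int[symmetric])
  finally show ?thesis .
qed

section \<open>Standard cocycles\<close>

definition std_cocycle :: "'k::field \<Rightarrow> int \<times> int \<Rightarrow> int \<times> int \<Rightarrow> 'k" where
  "std_cocycle \<beta> x y =
    (if x \<in> carrier G \<and> y \<in> carrier G \<and> snd x = 1 then \<beta> ^ nat (fst y) else 1)"

definition admissible_root :: "'k::field \<Rightarrow> bool" where
  "admissible_root \<beta> \<longleftrightarrow> \<beta> ^ n = 1 \<and> \<beta> ^ Suc a_nat = 1 \<and> \<beta> ^ m_nat = 1"

lemma power_nat_mod_eq: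
  fixes \<beta> :: "'a::monoid_mult"
  assumes "\<beta> ^ n = 1" and "int k mod int n = w mod int n"
  shows "\<beta> ^ nat (w mod int n) = \<beta> ^ k"
  by (rule power_eq_one_mod_cong[OF assms(1)]) (simp add: assms(2)[symmetric] zmod_int[symmetric])

lemma root_of_unity_nonzero: "(\<beta>::'k::field) ^ n = 1 \<Longrightarrow> \<beta> \<noteq> 0"
  using n_pos by (cases n) auto

lemma std_cocycle_mult: "std_cocycle \<beta> x y * std_cocycle \<gamma> x y = std_cocycle (\<beta> * \<gamma>) x y"
  by (simp add: std_cocycle_def power_mult_distrib)

lemma std_cocycle_in_cocycles2:
  fixes \<beta> :: "'k::field"
  assumes "admissible_root \<beta>"
  shows "std_cocycle \<beta> \<in> cocycles2 G"
proof (rule cocycles2I)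
  have \<beta>: "\<beta> ^ n = 1" "\<beta> ^ Suc a_nat = 1" "\<beta> ^ m_nat = 1"
    using assms by (simp_all add: admissible_root_def)
  fix x y z assume xyz: "x \<in> carrier G" "y \<in> carrier G" "z \<in> carrier G"
  obtain I e where x: "x = (int I, e)" "e = 0 \<or> e = 1" using carrier_G_cases[OF xyz(1)] by metis
  obtain J f where y: "y = (int J, f)" "f = 0 \<or> f = 1" using carrier_G_cases[OF xyz(2)] by metis
  obtain K g where z: "z = (int K, g)" "g = 0 \<or> g = 1" using carrier_G_cases[OF xyz(3)] by metis
  have closed: "x \<otimes>\<^bsub>G\<^esub> y \<in> carrier G" "y \<otimes>\<^bsub>G\<^esub> z \<in> carrier G" using xyz by simp_all
  show "std_cocycle \<beta> y z * std_cocycle \<beta> x (y \<otimes>\<^bsub>G\<^esub> z) =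
    std_cocycle \<beta> (x \<otimes>\<^bsub>G\<^esub> y) z * std_cocycle \<beta> x y"
  proof (cases "e = 1")
    case False
    then have "e = 0" using x by simp
    then show ?thesis using xyz closed x y by (simp add: std_cocycle_def mult_G_simps)
  next
    case e: True
    show ?thesis
    proof (cases "f = 1")
      case False
      then have "f = 0" using y by simp
      moreover have "\<beta> ^ nat ((int J + int K) mod int n) = \<beta> ^ (J + K)"
        by (rule power_nat_mod_eq[OF \<beta>(1)]) simp
      ultimately show ?thesis
        using xyz closed x y z e by (auto simp: std_cocycle_def mult_G_simps power_add)
    next
      case f: True
      define M where "M = (if g = 1 then m_nat else 0)"
      have "\<beta> ^ nat ((int J + a * int K + (if g = 1 then m else 0)) mod int n)
          = \<beta> ^ (J + a_nat * K + M)"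
        by (rule power_nat_mod_eq[OF \<beta>(1)])
          (cases "g = 1"; simp only: M_def int_a_nat int_m_nat of_nat_add of_nat_mult if_True if_False
            of_nat_0; intro mod_add_cong mod_mult_cong; simp add: int_m_nat)
      moreover have "\<beta> ^ K * \<beta> ^ (J + a_nat * K + M) = \<beta> ^ J"
      proof -
        have "(\<beta> ^ Suc a_nat) ^ K = \<beta> ^ K * \<beta> ^ (a_nat * K)"
          by (simp add: power_mult_distrib power_mult)
        then have "\<beta> ^ K * \<beta> ^ (J + a_nat * K + M) = \<beta> ^ J * (\<beta> ^ Suc a_nat) ^ K * \<beta> ^ M"
          by (simp add: power_add mult_ac)
        then show ?thesis using \<beta> by (simp add: M_def)
      qed
      ultimately show ?thesis
        using xyz closed x y z e f by (auto simp: std_cocycle_def mult_G_simps)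
    qed
  qed
qed (use root_of_unity_nonzero assms in \<open>auto simp: std_cocycle_def admissible_root_def\<close>)

lemma exists_root_power_one_minus_a:
  fixes \<beta> :: "'k::field"
  assumes "alg_closed TYPE('k)" and "\<beta> ^ N = 1"
  shows "\<exists>\<zeta>. \<zeta> ^ n = 1 \<and> \<zeta> ^ nat ((1 - a) mod int n) = \<beta>"
proof -
  define c where "c = nat ((1 - a) mod int n)"
  define d where "d = gcd c n"
  have "int c = (1 - a) mod int n" using n_pos by (simp add: c_def)
  have "int d = gcd (int c) (int n)" by (simp add: d_def)
  also have "\<dots> = gcd (int n) ((1 - a) mod int n)" by (simp add: \<open>int c = _\<close> gcd.commute)
  also have "\<dots> = gcd (- (a - 1)) (int n)" by (simp add: gcd_red_int[symmetric])
  finally have "int d = d_minus" by (simp only: gcd_neg1_int d_minus_def)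
  then have "int (d * N) = int n" using N_mult_d_minus by (simp add: mult.commute)
  then have n_eq: "d * N = n" by (simp only: of_nat_eq_iff)
  have "d \<ge> 1" using d_minus_pos \<open>int d = d_minus\<close> by simp
  then obtain \<mu> where \<mu>: "\<mu> ^ d = \<beta>" using alg_closed_nth_root[OF assms(1)] by blast
  have "\<mu> ^ (d * N) = 1" using \<mu> assms(2) by (simp add: power_mult)
  then have \<mu>_n: "\<mu> ^ n = 1" by (simp only: n_eq)
  show ?thesis
  proof (cases "c = 0")
    case True
    then have "d = n" by (simp add: d_def)
    then have "n * N = n * 1" using n_eq by simp
    then have "N = 1" using n_pos by simp
    then show ?thesis using assms(2) True by (intro exI[of _ 1]) (simp add: c_def)
  next
    case False
    obtain x y where xy: "c * x = n * y + d" using bezout_nat[OF False, of n] by (auto simp: d_def)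
    have "(\<mu> ^ x) ^ c = \<mu> ^ (c * x)" by (simp add: power_mult[symmetric] mult.commute)
    also have "\<dots> = \<mu> ^ (n * y + d)" by (simp only: xy)
    also have "\<dots> = \<beta>" using \<mu>_n \<mu> by (simp add: power_add power_mult)
    finally have "(\<mu> ^ x) ^ c = \<beta>" .
    moreover have "(\<mu> ^ x) ^ n = (\<mu> ^ n) ^ x" by (simp only: power_mult[symmetric] mult.commute)
    then have "(\<mu> ^ x) ^ n = 1" using \<mu>_n by simp
    ultimately show ?thesis by (auto simp: c_def)
  qed
qed

lemma std_cocycle_in_coboundaries2:
  fixes \<beta> :: "'k::field"
  assumes "alg_closed TYPE('k)" and "\<beta> ^ N = 1"
  shows "std_cocycle \<beta> \<in> coboundaries2 G"
proof -
  define c where "c = nat ((1 - a) mod int n)"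
  obtain \<zeta> where \<zeta>: "\<zeta> ^ n = 1" "\<zeta> ^ c = \<beta>"
    using exists_root_power_one_minus_a[OF assms] by (auto simp: c_def)
  obtain \<nu> where \<nu>: "\<nu> ^ 2 = \<zeta> ^ m_nat" using alg_closed_nth_root[OF assms(1), of 2] by auto
  have "\<zeta> \<noteq> 0" using \<zeta>(1) by (rule root_of_unity_nonzero)
  then have "\<nu> \<noteq> 0" using \<nu> by (metis power_not_zero zero_power2)
  define h where "h x = \<zeta> ^ nat (fst x) * \<nu> ^ nat (snd x)" for x :: "int \<times> int"
  have h_nonzero: "h x \<noteq> 0" for x using \<open>\<zeta> \<noteq> 0\<close> \<open>\<nu> \<noteq> 0\<close> by (simp add: h_def)
  have twist: "\<beta> ^ J * \<zeta> ^ (a_nat * J) = \<zeta> ^ J" for J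
  proof -
    have "\<beta> ^ J * \<zeta> ^ (a_nat * J) = \<zeta> ^ ((c + a_nat) * J)"
      by (simp add: \<zeta>(2)[symmetric] power_mult[symmetric] power_add algebra_simps)
    also have "\<dots> = \<zeta> ^ J"
    proof (rule power_eq_one_mod_cong[OF \<zeta>(1)])
      have "int (c + a_nat) mod int n = int 1 mod int n"
        using n_pos by (simp add: c_def int_a_nat mod_simps)
      then have "(c + a_nat) mod n = 1 mod n" by (metis of_nat_eq_iff zmod_int)
      then show "(c + a_nat) * J mod n = J mod n" by (metis mod_mult_left_eq mult_1)
    qed
    finally show ?thesis .
  qed
  have h_mult: "h (x \<otimes>\<^bsub>G\<^esub> y) * std_cocycle \<beta> x y = h x * h y"
    if xy: "x \<in> carrier G" "y \<in> carrier G" for x y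
  proof -
    obtain I e where x: "x = (int I, e)" "e = 0 \<or> e = 1" using carrier_G_cases[OF xy(1)] by metis
    obtain J f where y: "y = (int J, f)" "f = 0 \<or> f = 1" using carrier_G_cases[OF xy(2)] by metis
    have power_mod: "\<zeta> ^ nat (w mod int n) = \<zeta> ^ k" if "int k mod int n = w mod int n" for k w
      using power_nat_mod_eq[OF \<zeta>(1) that] .
    consider "e = 0" | "e = 1" "f = 0" | "e = 1" "f = 1" using x y by blast
    then show ?thesis
    proof cases
      case 1
      then show ?thesis
        using xy x y power_mod[of "I + J"]
        by (auto simp: h_def std_cocycle_def mult_G_simps power_add)
    next
      case 2
      have "\<zeta> ^ nat ((int I + a * int J) mod int n) = \<zeta> ^ (I + a_nat * J)"
        by (rule power_mod) (simp add: int_a_nat, intro mod_add_cong mod_mult_cong; simp)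
      then show ?thesis
        using xy x y 2 twist[of J] by (simp add: h_def std_cocycle_def mult_G_simps power_add mult_ac)
    next
      case 3
      have "\<zeta> ^ nat ((int I + a * int J + m) mod int n) = \<zeta> ^ (I + a_nat * J + m_nat)"
        by (rule power_mod) (simp add: int_a_nat int_m_nat, intro mod_add_cong mod_mult_cong; simp)
      moreover have "\<beta> ^ J * (\<zeta> ^ m_nat * \<zeta> ^ (J * a_nat)) = \<nu> * (\<nu> * \<zeta> ^ J)"
      proof -
        have "\<beta> ^ J * (\<zeta> ^ m_nat * \<zeta> ^ (J * a_nat)) = \<zeta> ^ m_nat * (\<beta> ^ J * \<zeta> ^ (a_nat * J))"
          by (simp add: mult_ac)
        also have "\<dots> = \<zeta> ^ m_nat * \<zeta> ^ J" by (simp only: twist)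
        also have "\<dots> = \<nu> * (\<nu> * \<zeta> ^ J)" by (simp add: \<nu>[symmetric] power2_eq_square)
        finally show ?thesis .
      qed
      ultimately show ?thesis
        using xy x y 3 by (simp add: h_def std_cocycle_def mult_G_simps power_add mult_ac)
    qed
  qed
  show ?thesis
    unfolding coboundaries2_def
  proof (intro CollectI exI conjI allI)
    show "\<forall>x\<in>carrier G. h x \<noteq> 0" using h_nonzero by blast
    fix x y
    show "std_cocycle \<beta> x y =
      (if x \<in> carrier G \<and> y \<in> carrier G then h y * inverse (h (x \<otimes>\<^bsub>G\<^esub> y)) * h x else 1)"
      using h_mult[of x y] h_nonzero[of "x \<otimes>\<^bsub>G\<^esub> y"]
      by (auto simp: std_cocycle_def field_simps)
  qed
qed

lemma int_a_nat_mult_N_mod: "int (a_nat * N) mod int n = int N mod int n"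
proof -
  have "int (a_nat * N) - int N = (a - 1) * int N - int n * (a div int n * int N)"
    by (simp add: int_a_nat algebra_simps minus_div_mult_eq_mod[symmetric])
  then have "int n dvd int (a_nat * N) - int N" using n_dvd_a_minus_1_mult_N by simp
  then show ?thesis by (simp add: mod_eq_dvd_iff)
qed

lemma power_N_eq_1_if_std_cocycle_in_coboundaries2:
  fixes \<beta> :: "'k::field"
  assumes \<beta>: "\<beta> ^ n = 1" and coboundary: "std_cocycle \<beta> \<in> coboundaries2 G"
  shows "\<beta> ^ N = 1"
proof -
  obtain h where h_nonzero: "\<forall>x\<in>carrier G. h x \<noteq> 0" and
    h: "\<And>x y. std_cocycle \<beta> x y = (if x \<in> carrier G \<and> y \<in> carrier G
                      then h y * inverse (h (x \<otimes>\<^bsub>G\<^esub> y)) * h x else 1)"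
    using coboundary unfolding coboundaries2_def by blast
  have h_mult: "h (x \<otimes>\<^bsub>G\<^esub> y) * std_cocycle \<beta> x y = h x * h y"
    if "x \<in> carrier G" "y \<in> carrier G" for x y
    using that h[of x y] h_nonzero by (simp add: field_simps)
  define \<zeta> where "\<zeta> = h t"
  have "h (0, 0) * h (0, 0) = h (0, 0)"
    using h_mult[of "(0, 0)" "(0, 0)"] n_pos by (simp add: carrier_G std_cocycle_def mult_G_simps)
  then have h_one: "h (0, 0) = 1" using h_nonzero n_pos by (simp add: carrier_G)
  have h_t_pow: "h (int k mod int n, 0) = \<zeta> ^ k" for k
  proof (induction k)
    case 0
    then show ?case using h_one by simp
  next
    case (Suc k)
    have "(int k mod int n, 0::int) \<otimes>\<^bsub>G\<^esub> t = (int (Suc k) mod int n, 0)"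
      by (simp add: t_def mult_G_simps mod_simps add.commute)
    then show ?case
      using h_mult[of "(int k mod int n, 0)" t] t_closed Suc n_pos
      by (simp add: carrier_G std_cocycle_def \<zeta>_def mult.commute)
  qed
  have "\<zeta> \<noteq> 0" using h_nonzero t_closed by (simp add: \<zeta>_def)
  have \<zeta>_n: "\<zeta> ^ n = 1" using h_t_pow[of n] h_one by simp
  have a0: "(a mod int n, 0::int) \<in> carrier G" and a1: "(a mod int n, 1::int) \<in> carrier G"
    using n_pos by (simp_all add: carrier_G)
  have "h (a mod int n, 1) * \<beta> = \<zeta> * h \<sigma>"
  proof -
    have "\<beta> ^ nat (1 mod int n) = \<beta>"
      using power_nat_mod_eq[OF \<beta>, of 1] by simp
    then show ?thesis
      using h_mult[OF \<sigma>_closed t_closed] \<sigma>_t \<sigma>_closed t_closed by (simp add: std_cocycle_def \<sigma>_def t_def \<zeta>_def mult.commute)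
  qed
  moreover have "h (a mod int n, 1) = \<zeta> ^ a_nat * h \<sigma>"
    using h_mult[OF a0 \<sigma>_closed] h_t_pow[of a_nat]
    by (simp add: std_cocycle_def \<sigma>_def mult_G_simps int_a_nat)
  ultimately have twist: "\<beta> * \<zeta> ^ a_nat = \<zeta>"
    using h_nonzero \<sigma>_closed by (simp add: mult_ac)
  have "\<zeta> ^ (a_nat * N) = \<zeta> ^ N"
    by (rule power_eq_one_mod_cong[OF \<zeta>_n]) (metis int_a_nat_mult_N_mod of_nat_eq_iff zmod_int)
  then have "\<beta> ^ N * \<zeta> ^ N = (\<beta> * \<zeta> ^ a_nat) ^ N"
    by (simp add: power_mult_distrib power_mult)
  then have "\<beta> ^ N * \<zeta> ^ N = \<zeta> ^ N" by (simp add: twist)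
  then show ?thesis using \<open>\<zeta> \<noteq> 0\<close> by simp
qed

end

section \<open>Reduction to standard cocycles\<close>

locale gnam_cocycle = gnam +
  fixes f :: "int \<times> int \<Rightarrow> int \<times> int \<Rightarrow> 'k::field"
  assumes f_cocycle: "f \<in> cocycles2 (Gnam n a m)"

sublocale gnam_cocycle \<subseteq> cocycle_extension "Gnam n a m" f
  by (rule cocycle_extension.intro[OF group_G], rule cocycle_extension_axioms.intro, rule f_cocycle)

context gnam_cocycle
begin

lemma exists_lift_t:
  assumes "alg_closed TYPE('k)"
  shows "\<exists>T\<in>carrier E. snd T = t \<and> T [^]\<^bsub>E\<^esub> n = \<one>\<^bsub>E\<^esub>"
proof -
  have t_lift: "((1::'k), t) \<in> carrier E" by (simp add: carrier_E t_closed)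
  moreover have "snd (((1::'k), t) [^]\<^bsub>E\<^esub> n) = snd \<one>\<^bsub>E\<^esub>"
    using t_lift by (simp add: snd_pow_E t_pow one_E one_G)
  ultimately show ?thesis
    using exists_lift_pow_eq[OF assms n_pos t_lift E.one_closed] by simp
qed

lemma exists_lift_\<sigma>:
  assumes "alg_closed TYPE('k)" and T: "T \<in> carrier E" "snd T = t"
  shows "\<exists>S\<in>carrier E. snd S = \<sigma> \<and> S [^]\<^bsub>E\<^esub> (2::nat) = T [^]\<^bsub>E\<^esub> m_nat"
proof -
  have \<sigma>_lift: "((1::'k), \<sigma>) \<in> carrier E" by (simp add: carrier_E \<sigma>_closed)
  have "snd (((1::'k), \<sigma>) [^]\<^bsub>E\<^esub> (2::nat)) = \<sigma> \<otimes>\<^bsub>G\<^esub> \<sigma>"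
    using \<sigma>_lift \<sigma>_closed by (simp add: snd_pow_E snd_mult_E numeral_2_eq_2)
  also have "\<sigma> \<otimes>\<^bsub>G\<^esub> \<sigma> = snd (T [^]\<^bsub>E\<^esub> m_nat)"
    using T by (simp add: snd_pow_E t_pow \<sigma>_def mult_G_simps int_m_nat)
  finally show ?thesis
    using exists_lift_pow_eq[OF assms(1) _ \<sigma>_lift E.nat_pow_closed[OF T(1)]] by simp
qed

lemma exists_commutator_scalar:
  assumes "T \<in> carrier E" "snd T = t" "S \<in> carrier E" "snd S = \<sigma>"
  shows "\<exists>\<beta>. S \<otimes>\<^bsub>E\<^esub> T = scale_fst \<beta> (T [^]\<^bsub>E\<^esub> a_nat \<otimes>\<^bsub>E\<^esub> S)"
proof -
  have "snd (S \<otimes>\<^bsub>E\<^esub> T) = snd (T [^]\<^bsub>E\<^esub> a_nat \<otimes>\<^bsub>E\<^esub> S)"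
    using assms \<sigma>_t by (simp add: snd_mult_E snd_pow_E t_pow \<sigma>_def mult_G_simps int_a_nat)
  then show ?thesis
    using eq_scale_fst_if_snd_eq assms by (meson E.m_closed E.nat_pow_closed)
qed

end

locale gnam_lift = gnam_cocycle +
  fixes T S and \<beta>
  assumes T: "T \<in> carrier E" "snd T = t" "T [^]\<^bsub>E\<^esub> n = \<one>\<^bsub>E\<^esub>"
    and S: "S \<in> carrier E" "snd S = \<sigma>" "S \<otimes>\<^bsub>E\<^esub> S = T [^]\<^bsub>E\<^esub> m_nat"
    and S_T: "S \<otimes>\<^bsub>E\<^esub> T = scale_fst \<beta> (T [^]\<^bsub>E\<^esub> a_nat \<otimes>\<^bsub>E\<^esub> S)"
begin

lemma T_pow_mod_cong: "int k mod int n = int k' mod int n \<Longrightarrow> T [^]\<^bsub>E\<^esub> k = T [^]\<^bsub>E\<^esub> k'"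
  using E.nat_pow_mod_cong[OF T(1,3)] by (metis of_nat_eq_iff zmod_int)

lemma S_T_pow: "S \<otimes>\<^bsub>E\<^esub> T [^]\<^bsub>E\<^esub> j = scale_fst (\<beta> ^ j) (T [^]\<^bsub>E\<^esub> (a_nat * j) \<otimes>\<^bsub>E\<^esub> S)"
proof (induction j)
  case 0
  then show ?case using S(1) by (simp add: scale_fst_1)
next
  case (Suc j)
  have "S \<otimes>\<^bsub>E\<^esub> T [^]\<^bsub>E\<^esub> Suc j = (S \<otimes>\<^bsub>E\<^esub> T [^]\<^bsub>E\<^esub> j) \<otimes>\<^bsub>E\<^esub> T"
    using S(1) T(1) by (simp add: E.m_assoc)
  also have "\<dots> = scale_fst (\<beta> ^ j) (T [^]\<^bsub>E\<^esub> (a_nat * j) \<otimes>\<^bsub>E\<^esub> (S \<otimes>\<^bsub>E\<^esub> T))"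
    using Suc S(1) T(1) by (simp add: E.m_assoc scale_fst_mult_left)
  also have "\<dots> = scale_fst (\<beta> ^ Suc j) (T [^]\<^bsub>E\<^esub> (a_nat * j) \<otimes>\<^bsub>E\<^esub> T [^]\<^bsub>E\<^esub> a_nat \<otimes>\<^bsub>E\<^esub> S)"
    using S(1) T(1) by (simp add: S_T scale_fst_mult_right scale_fst_scale_fst E.m_assoc mult.commute)
  also have "\<dots> = scale_fst (\<beta> ^ Suc j) (T [^]\<^bsub>E\<^esub> (a_nat * Suc j) \<otimes>\<^bsub>E\<^esub> S)"
    using T(1) by (simp add: E.nat_pow_mult add.commute)
  finally show ?case .
qed

lemma \<beta>_power_n: "\<beta> ^ n = 1"
proof -
  have "T [^]\<^bsub>E\<^esub> (a_nat * n) = \<one>\<^bsub>E\<^esub>"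
    using T_pow_mod_cong[of "a_nat * n" 0] by simp
  then have "scale_fst (\<beta> ^ n) S = S"
    using S_T_pow[of n] T S(1) by simp
  then show ?thesis using scale_fst_eq_selfD S(1) by blast
qed

lemma \<beta>_power_m_nat: "\<beta> ^ m_nat = 1"
proof -
  have "S \<otimes>\<^bsub>E\<^esub> T [^]\<^bsub>E\<^esub> m_nat = T [^]\<^bsub>E\<^esub> m_nat \<otimes>\<^bsub>E\<^esub> S"
    using S by (simp flip: S(3) add: E.m_assoc)
  moreover have "T [^]\<^bsub>E\<^esub> (a_nat * m_nat) = T [^]\<^bsub>E\<^esub> m_nat"
    by (rule T_pow_mod_cong[OF int_a_nat_mult_m_nat_mod])
  ultimately have "scale_fst (\<beta> ^ m_nat) (T [^]\<^bsub>E\<^esub> m_nat \<otimes>\<^bsub>E\<^esub> S) = T [^]\<^bsub>E\<^esub> m_nat \<otimes>\<^bsub>E\<^esub> S"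
    using S_T_pow[of m_nat] by simp
  then show ?thesis using scale_fst_eq_selfD S(1) T(1) by blast
qed

lemma \<beta>_power_Suc_a_nat: "\<beta> ^ Suc a_nat = 1"
proof -
  have "S \<otimes>\<^bsub>E\<^esub> (S \<otimes>\<^bsub>E\<^esub> T) = T [^]\<^bsub>E\<^esub> m_nat \<otimes>\<^bsub>E\<^esub> T"
    using S(1) T(1) by (simp add: E.m_assoc[symmetric] S(3))
  also have "\<dots> = T \<otimes>\<^bsub>E\<^esub> T [^]\<^bsub>E\<^esub> m_nat"
    using T(1) by (simp add: E.nat_pow_Suc2[symmetric])
  finally have left: "S \<otimes>\<^bsub>E\<^esub> (S \<otimes>\<^bsub>E\<^esub> T) = T \<otimes>\<^bsub>E\<^esub> T [^]\<^bsub>E\<^esub> m_nat" .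
  have "S \<otimes>\<^bsub>E\<^esub> (S \<otimes>\<^bsub>E\<^esub> T) = scale_fst \<beta> ((S \<otimes>\<^bsub>E\<^esub> T [^]\<^bsub>E\<^esub> a_nat) \<otimes>\<^bsub>E\<^esub> S)"
    using S(1) T(1) by (simp add: S_T scale_fst_mult_right E.m_assoc)
  also have "\<dots> = scale_fst (\<beta> ^ Suc a_nat) (T [^]\<^bsub>E\<^esub> (a_nat * a_nat) \<otimes>\<^bsub>E\<^esub> S \<otimes>\<^bsub>E\<^esub> S)"
    by (simp add: S_T_pow scale_fst_mult_left scale_fst_scale_fst)
  also have "\<dots> = scale_fst (\<beta> ^ Suc a_nat) (T \<otimes>\<^bsub>E\<^esub> T [^]\<^bsub>E\<^esub> m_nat)"
    using T_pow_mod_cong[OF int_a_nat_mult_a_nat_mod] T(1) S(1) by (simp add: E.m_assoc S(3))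
  finally show ?thesis
    using left scale_fst_eq_selfD T(1) by (metis E.m_closed E.nat_pow_closed)
qed

lemma admissible_root_\<beta>: "admissible_root \<beta>"
  using \<beta>_power_n \<beta>_power_Suc_a_nat \<beta>_power_m_nat by (simp add: admissible_root_def)

lemma T_pow_nat_mod: "int k mod int n = w mod int n \<Longrightarrow> T [^]\<^bsub>E\<^esub> nat (w mod int n) = T [^]\<^bsub>E\<^esub> k"
  using n_pos by (intro T_pow_mod_cong) simp

definition lift where
  "lift (g :: int \<times> int) = T [^]\<^bsub>E\<^esub> nat (fst g) \<otimes>\<^bsub>E\<^esub> S [^]\<^bsub>E\<^esub> nat (snd g)"

lemma lift_closed: "lift g \<in> carrier E"
  using T(1) S(1) by (simp add: lift_def)

lemma snd_lift: "g \<in> carrier G \<Longrightarrow> snd (lift g) = g"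
  using t_pow_\<sigma>_pow[of "fst g" "snd g"] T S by (simp add: lift_def snd_mult_E snd_pow_E)

lemma lift_mult:
  assumes "g \<in> carrier G" "g' \<in> carrier G"
  shows "lift g \<otimes>\<^bsub>E\<^esub> lift g' = scale_fst (std_cocycle \<beta> g g') (lift (g \<otimes>\<^bsub>G\<^esub> g'))"
proof -
  obtain I e where g: "g = (int I, e)" "e = 0 \<or> e = 1" using carrier_G_cases[OF assms(1)] by metis
  obtain J f where g': "g' = (int J, f)" "f = 0 \<or> f = 1" using carrier_G_cases[OF assms(2)] by metis
  have T_S_T: "T [^]\<^bsub>E\<^esub> I \<otimes>\<^bsub>E\<^esub> S \<otimes>\<^bsub>E\<^esub> T [^]\<^bsub>E\<^esub> J
      = scale_fst (\<beta> ^ J) (T [^]\<^bsub>E\<^esub> (I + a_nat * J) \<otimes>\<^bsub>E\<^esub> S)"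
    using S(1) T(1) by (simp add: E.m_assoc S_T_pow scale_fst_mult_right E.nat_pow_mult[symmetric])
  consider "e = 0" | "e = 1" "f = 0" | "e = 1" "f = 1" using g g' by blast
  then show ?thesis
  proof cases
    case 1
    have "T [^]\<^bsub>E\<^esub> nat ((int I + int J) mod int n) = T [^]\<^bsub>E\<^esub> (I + J)"
      by (rule T_pow_nat_mod) simp
    then show ?thesis
      using 1 assms g g' S(1) T(1)
      by (auto simp: lift_def std_cocycle_def mult_G_simps scale_fst_1 E.m_assoc[symmetric]
          E.nat_pow_mult)
  next
    case 2
    have "T [^]\<^bsub>E\<^esub> nat ((int I + a * int J) mod int n) = T [^]\<^bsub>E\<^esub> (I + a_nat * J)"
      by (rule T_pow_nat_mod) (simp add: int_a_nat, intro mod_add_cong mod_mult_cong; simp)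
    then show ?thesis
      using 2 assms g g' T_S_T S(1) T(1) by (simp add: lift_def std_cocycle_def mult_G_simps)
  next
    case 3
    have "T [^]\<^bsub>E\<^esub> nat ((int I + a * int J + m) mod int n) = T [^]\<^bsub>E\<^esub> (I + a_nat * J + m_nat)"
      by (rule T_pow_nat_mod) (simp add: int_a_nat int_m_nat, intro mod_add_cong mod_mult_cong; simp)
    moreover have "lift g \<otimes>\<^bsub>E\<^esub> lift g' = scale_fst (\<beta> ^ J) (T [^]\<^bsub>E\<^esub> (I + a_nat * J + m_nat))"
    proof -
      have "lift g \<otimes>\<^bsub>E\<^esub> lift g' = (T [^]\<^bsub>E\<^esub> I \<otimes>\<^bsub>E\<^esub> S \<otimes>\<^bsub>E\<^esub> T [^]\<^bsub>E\<^esub> J) \<otimes>\<^bsub>E\<^esub> S"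
        using 3 g g' S(1) T(1) by (simp add: lift_def E.m_assoc)
      also have "\<dots> = scale_fst (\<beta> ^ J) (T [^]\<^bsub>E\<^esub> (I + a_nat * J) \<otimes>\<^bsub>E\<^esub> (S \<otimes>\<^bsub>E\<^esub> S))"
        using S(1) T(1) by (simp add: T_S_T scale_fst_mult_left E.m_assoc)
      also have "\<dots> = scale_fst (\<beta> ^ J) (T [^]\<^bsub>E\<^esub> (I + a_nat * J + m_nat))"
        using T(1) by (simp add: S(3) E.nat_pow_mult)
      finally show ?thesis .
    qed
    ultimately show ?thesis
      using 3 assms g g' T(1) by (simp add: lift_def std_cocycle_def mult_G_simps)
  qed
qed

lemma cocycle_decomposition: "\<exists>b\<in>coboundaries2 G. f = (\<lambda>x y. b x y * std_cocycle \<beta> x y)"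
  by (rule cocycle_eq_coboundary_mult_if_section[where s = lift])
    (auto simp: lift_closed snd_lift lift_mult std_cocycle_def)

end

lemma (in gnam) cocycles2_decomposition:
  fixes f :: "int \<times> int \<Rightarrow> int \<times> int \<Rightarrow> 'k::field"
  assumes "alg_closed TYPE('k)" and "f \<in> cocycles2 G"
  shows "\<exists>\<beta>. admissible_root \<beta> \<and> (\<exists>b\<in>coboundaries2 G. f = (\<lambda>x y. b x y * std_cocycle \<beta> x y))"
proof -
  interpret gnam_cocycle n a m f by unfold_locales (rule assms(2))
  obtain T where T: "T \<in> carrier E" "snd T = t" "T [^]\<^bsub>E\<^esub> n = \<one>\<^bsub>E\<^esub>"
    using exists_lift_t[OF assms(1)] by blast
  obtain S where S: "S \<in> carrier E" "snd S = \<sigma>" "S [^]\<^bsub>E\<^esub> (2::nat) = T [^]\<^bsub>E\<^esub> m_nat"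
    using exists_lift_\<sigma>[OF assms(1) T(1,2)] by blast
  obtain \<beta> where "S \<otimes>\<^bsub>E\<^esub> T = scale_fst \<beta> (T [^]\<^bsub>E\<^esub> a_nat \<otimes>\<^bsub>E\<^esub> S)"
    using exists_commutator_scalar[OF T(1,2) S(1,2)] by blast
  then interpret gnam_lift n a m f T S \<beta>
    using T S by unfold_locales (simp_all add: numeral_2_eq_2)
  show ?thesis using admissible_root_\<beta> cocycle_decomposition by blast
qed

section \<open>Computation of \<open>H2\<close>\<close>

context gnam
begin

lemma d_plus_dvd_n: "d_plus dvd int n"
  by (simp add: d_plus_def)

lemma dvd_m_nat_iff: "d dvd int n \<Longrightarrow> d dvd int m_nat \<longleftrightarrow> d dvd m"
  by (simp add: int_m_nat dvd_mod_iff)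

lemma admissible_root_power_d_plus:
  "admissible_root \<beta> \<Longrightarrow> \<beta> ^ nat d_plus = 1"
  using power_gcd_eq_one[of \<beta> "Suc a_nat" n] int_gcd_Suc_a_nat
  by (simp add: admissible_root_def flip: int_gcd_Suc_a_nat)

lemma admissible_root_power_N_square: "admissible_root (\<beta>::'k::field) \<Longrightarrow> (\<beta> ^ N)\<^sup>2 = 1"
proof -
  assume \<beta>: "admissible_root \<beta>"
  have "nat d_plus dvd N * 2" using d_plus_eq_N_or_2N by (auto simp: nat_mult_distrib)
  then have "\<beta> ^ (N * 2) = 1"
    by (rule power_eq_one_if_dvd[OF admissible_root_power_d_plus[OF \<beta>]])
  then show ?thesis by (simp only: power_mult)
qed

lemma admissible_root_power_N_eq_1:
  fixes \<beta> :: "'k::field"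
  assumes \<beta>: "admissible_root \<beta>" and "d_plus = int N \<or> \<not> d_plus dvd m"
  shows "\<beta> ^ N = 1"
proof (cases "d_plus = int N")
  case True
  then show ?thesis using admissible_root_power_d_plus[OF \<beta>] by simp
next
  case False
  then have d_plus: "d_plus = 2 * int N" "\<not> d_plus dvd m"
    using assms(2) d_plus_eq_N_or_2N by auto
  have "int N dvd int n" using N_mult_d_minus by (metis dvd_triv_left)
  then have "int N dvd int m_nat" using N_dvd_a_plus_1_and_m(2) dvd_m_nat_iff by blast
  then obtain q where q: "m_nat = N * q" by (metis dvdE of_nat_dvd_iff)
  have "odd q"
  proof
    assume "even q"
    then have "d_plus dvd int m_nat" using d_plus(1) q by (auto simp: mult.commute)
    then show False using d_plus(2) dvd_m_nat_iff d_plus_dvd_n by blast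
  qed
  then have "gcd q 2 = 1" by (simp add: coprime_iff_gcd_eq_1[symmetric])
  moreover have "(\<beta> ^ N) ^ q = 1"
    using \<beta> q by (simp add: admissible_root_def power_mult[symmetric])
  moreover have "(\<beta> ^ N) ^ 2 = 1" using admissible_root_power_N_square[OF \<beta>] .
  ultimately show ?thesis using power_gcd_eq_one[of "\<beta> ^ N" q 2] by simp
qed

lemma exists_admissible_root_power_N_eq_minus_1:
  assumes "alg_closed TYPE('k::field)" and "d_plus = 2 * int N" and "d_plus dvd m"
  shows "\<exists>\<beta>::'k. admissible_root \<beta> \<and> \<beta> ^ N = - 1"
proof -
  obtain \<beta> :: 'k where \<beta>: "\<beta> ^ N = - 1" using alg_closed_nth_root[OF assms(1) N_pos] by blast
  have "\<beta> ^ nat d_plus = (\<beta> ^ N)\<^sup>2"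
    using assms(2) by (simp add: power_mult[symmetric] mult.commute nat_mult_distrib)
  then have d_plus_root: "\<beta> ^ nat d_plus = 1" using \<beta> by simp
  have "nat d_plus dvd n" "nat d_plus dvd Suc a_nat" "nat d_plus dvd m_nat"
    using d_plus_dvd_n int_gcd_Suc_a_nat dvd_m_nat_iff[OF d_plus_dvd_n] assms(3) d_plus_pos
    by (metis gcd_dvd1 int_dvd_int_iff int_nat_eq less_le)+
  then have "admissible_root \<beta>"
    unfolding admissible_root_def using power_eq_one_if_dvd[OF d_plus_root] by blast
  then show ?thesis using \<beta> by blast
qed

lemma cocycles2_subset_coboundaries2:
  assumes "alg_closed TYPE('k::field)" and "\<And>\<beta>::'k. admissible_root \<beta> \<Longrightarrow> \<beta> ^ N = 1"
  shows "(cocycles2 G :: (int \<times> int \<Rightarrow> int \<times> int \<Rightarrow> 'k) set) \<subseteq> coboundaries2 G"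
proof
  fix f :: "int \<times> int \<Rightarrow> int \<times> int \<Rightarrow> 'k" assume "f \<in> cocycles2 G"
  then obtain \<beta> b where \<beta>: "admissible_root \<beta>" and b: "b \<in> coboundaries2 G"
    and f: "f = (\<lambda>x y. b x y * std_cocycle \<beta> x y)"
    using cocycles2_decomposition[OF assms(1)] by blast
  have "std_cocycle \<beta> \<in> coboundaries2 G"
    using std_cocycle_in_coboundaries2[OF assms(1) assms(2)[OF \<beta>]] .
  then have "b \<otimes>\<^bsub>cocycle_group G\<^esub> std_cocycle \<beta> \<in> coboundaries2 G"
    by (rule subgroup.m_closed[OF subgroup_coboundaries2[OF group_G] b])
  then show "f \<in> coboundaries2 G" by (simp add: f)
qed

lemma std_cocycle_notin_coboundaries2:
  fixes \<beta> :: "'k::field"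
  assumes "(2::'k) \<noteq> 0" and "admissible_root \<beta>" and "\<beta> ^ N = - 1"
  shows "std_cocycle \<beta> \<notin> coboundaries2 G"
proof
  assume "std_cocycle \<beta> \<in> coboundaries2 G"
  moreover have "\<beta> ^ n = 1" using assms(2) by (simp add: admissible_root_def)
  ultimately have "\<beta> ^ N = 1" by (rule power_N_eq_1_if_std_cocycle_in_coboundaries2[rotated])
  then have "(1::'k) + 1 = 1 + - 1" using assms(3) by simp
  then have "(2::'k) = 0" by (simp only: one_add_one add.right_inverse)
  then show False using assms(1) by contradiction
qed

lemma H2_iso_integer_mod_group_2_if_root:
  fixes \<beta>\<^sub>0 :: "'k::field"
  assumes "alg_closed TYPE('k)" and "(2::'k) \<noteq> 0"
    and \<beta>\<^sub>0: "admissible_root \<beta>\<^sub>0" "\<beta>\<^sub>0 ^ N = - 1"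
  shows "H2 G TYPE('k) \<cong> integer_mod_group 2"
proof (rule H2_iso_integer_mod_group_2I[OF group_G std_cocycle_in_cocycles2[OF \<beta>\<^sub>0(1)]])
  interpret CG: comm_group "cocycle_group G :: (int \<times> int \<Rightarrow> int \<times> int \<Rightarrow> 'k) monoid"
    by (rule comm_group_cocycle_group)
  have B: "subgroup (coboundaries2 G) (cocycle_group G :: (int \<times> int \<Rightarrow> int \<times> int \<Rightarrow> 'k) monoid)"
    by (rule subgroup_coboundaries2[OF group_G])
  show "std_cocycle \<beta>\<^sub>0 \<notin> coboundaries2 G"
    by (rule std_cocycle_notin_coboundaries2[OF assms(2) \<beta>\<^sub>0])
  fix f :: "int \<times> int \<Rightarrow> int \<times> int \<Rightarrow> 'k" assume "f \<in> cocycles2 G"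
  then obtain \<beta> b where \<beta>: "admissible_root \<beta>" and b: "b \<in> coboundaries2 G"
    and "f = (\<lambda>x y. b x y * std_cocycle \<beta> x y)"
    using cocycles2_decomposition[OF assms(1)] by blast
  then have f: "f = b \<otimes>\<^bsub>cocycle_group G\<^esub> std_cocycle \<beta>" by simp
  consider "\<beta> ^ N = 1" | "\<beta> ^ N = - 1"
    using admissible_root_power_N_square[OF \<beta>] by (auto simp: power2_eq_1_iff)
  then show "f \<in> coboundaries2 G \<or> f \<in> coboundaries2 G #>\<^bsub>cocycle_group G\<^esub> std_cocycle \<beta>\<^sub>0"
  proof cases
    case 1
    then show ?thesis
      using subgroup.m_closed[OF B b std_cocycle_in_coboundaries2[OF assms(1)]] f by blast
  next
    case 2
    have "\<beta>\<^sub>0 \<noteq> 0" using \<beta>\<^sub>0(2) N_pos by (auto simp: power_0_left)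
    then have "(\<beta> / \<beta>\<^sub>0) ^ N = 1" using 2 \<beta>\<^sub>0(2) by (simp add: power_divide)
    then have "b \<otimes>\<^bsub>cocycle_group G\<^esub> std_cocycle (\<beta> / \<beta>\<^sub>0) \<in> coboundaries2 G"
      using subgroup.m_closed[OF B b std_cocycle_in_coboundaries2[OF assms(1)]] by blast
    moreover have "f = b \<otimes>\<^bsub>cocycle_group G\<^esub> std_cocycle (\<beta> / \<beta>\<^sub>0)
        \<otimes>\<^bsub>cocycle_group G\<^esub> std_cocycle \<beta>\<^sub>0"
      using \<open>\<beta>\<^sub>0 \<noteq> 0\<close> f by (simp add: std_cocycle_mult mult.assoc)
    ultimately show ?thesis
      using CG.rcosI[OF _ subgroup.subset[OF B], of _ "std_cocycle \<beta>\<^sub>0"]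
        std_cocycle_in_cocycles2[OF \<beta>\<^sub>0(1)] by auto
  qed
qed

lemma iso_Gnam_0_if_d_plus_dvd_m:
  assumes "d_plus dvd m"
  shows "G \<cong> Gnam n a 0"
proof -
  obtain u v where uv: "u * (a + 1) + v * int n = d_plus"
    using bezout_int[of "a + 1" "int n"] by (auto simp: d_plus_def)
  obtain q where q: "m = d_plus * q" using assms by (rule dvdE)
  define j where "j = - u * q"
  have "(1 + a) * j + m = int n * (v * q)" by (simp add: j_def q uv[symmetric] algebra_simps)
  then have shift: "int n dvd (1 + a) * j + m" by simp
  define \<phi> where "\<phi> x = ((fst x - snd x * j) mod int n, snd x)" for x :: "int \<times> int"
  define \<psi> where "\<psi> x = ((fst x + snd x * j) mod int n, snd x)" for x :: "int \<times> int"
  have carrier_0: "carrier (Gnam n a 0) = carrier G" by (simp add: Gnam_def)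
  have "\<phi> \<in> hom G (Gnam n a 0)"
  proof (rule homI)
    fix x assume "x \<in> carrier G"
    then show "\<phi> x \<in> carrier (Gnam n a 0)" using n_pos by (auto simp: carrier_0 carrier_G \<phi>_def)
  next
    fix x y assume "x \<in> carrier G" "y \<in> carrier G"
    then obtain i e k f where x: "x = (i, e)" "e = 0 \<or> e = 1" and y: "y = (k, f)" "f = 0 \<or> f = 1"
      by (auto simp: carrier_G)
    show "\<phi> (x \<otimes>\<^bsub>G\<^esub> y) = \<phi> x \<otimes>\<^bsub>Gnam n a 0\<^esub> \<phi> y"
      unfolding x y \<phi>_def mult_G
      using x(2) y(2) shift
      by (simp add: Gnam_def Gnam_mult_mod_left Gnam_mult_mod_right)
        (elim disjE; simp add: Gnam_mult_def mod_diff_left_eq mod_eq_dvd_iff; simp add: algebra_simps)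
  qed
  moreover have "bij_betw \<phi> (carrier G) (carrier (Gnam n a 0))"
  proof (rule bij_betw_byWitness[where f' = \<psi>])
    show "\<forall>x\<in>carrier G. \<psi> (\<phi> x) = x" by (auto simp: carrier_G \<phi>_def \<psi>_def mod_simps)
    show "\<forall>x\<in>carrier (Gnam n a 0). \<phi> (\<psi> x) = x" by (auto simp: carrier_0 carrier_G \<phi>_def \<psi>_def mod_simps)
    show "\<phi> ` carrier G \<subseteq> carrier (Gnam n a 0)" using n_pos by (auto simp: carrier_0 carrier_G \<phi>_def)
    show "\<psi> ` carrier (Gnam n a 0) \<subseteq> carrier G" using n_pos by (auto simp: carrier_0 carrier_G \<psi>_def)
  qed
  ultimately show ?thesis by (auto simp: is_iso_def iso_def)
qed

lemma d_plus_dvd_m_if_split: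
  assumes "alg_closed TYPE('k::field)" and "(2::'k) \<noteq> 0"
    and "d_plus = 2 * int N" and "Gnam_split n a m"
  shows "d_plus dvd m"
proof (rule ccontr)
  assume "\<not> d_plus dvd m"
  then have "(cocycles2 G :: (int \<times> int \<Rightarrow> int \<times> int \<Rightarrow> 'k) set) \<subseteq> coboundaries2 G"
    using cocycles2_subset_coboundaries2[OF assms(1)] admissible_root_power_N_eq_1 by blast
  then have trivial_0: "(cocycles2 (Gnam n a 0) :: (int \<times> int \<Rightarrow> int \<times> int \<Rightarrow> 'k) set)
      \<subseteq> coboundaries2 (Gnam n a 0)"
    using iso_cocycles2_subset_coboundaries2[OF group_G] assms(4) by (simp add: Gnam_split_def)
  interpret G\<^sub>0: gnam n a 0 using n_pos a_square by unfold_locales simp_all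
  have "G\<^sub>0.d_plus = d_plus" "G\<^sub>0.N = N"
    by (simp_all add: G\<^sub>0.d_plus_def d_plus_def G\<^sub>0.N_def N_def G\<^sub>0.d_minus_def d_minus_def)
  then obtain \<beta> :: 'k where \<beta>: "G\<^sub>0.admissible_root \<beta>" "\<beta> ^ G\<^sub>0.N = - 1"
    using G\<^sub>0.exists_admissible_root_power_N_eq_minus_1[OF assms(1)] assms(3) by auto
  show False
    using G\<^sub>0.std_cocycle_in_cocycles2[OF \<beta>(1)] G\<^sub>0.std_cocycle_notin_coboundaries2[OF assms(2) \<beta>]
      trivial_0 by blast
qed

end

theorem proposition4p13:
  fixes n :: nat and a m :: int
  assumes "alg_closed TYPE('k::field)"
    and "n \<ge> 1"
    and "of_nat (2 * n) \<noteq> (0::'k)"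
    and "a ^ 2 mod int n = 1 mod int n"
    and "((1 - a) * m) mod int n = 0"
  shows "(gcd (a - 1) (int n) * gcd (a + 1) (int n) = int n \<or> \<not> Gnam_split n a m
           \<longrightarrow> trivial_group (H2 (Gnam n a m) TYPE('k)))
       \<and> (gcd (a - 1) (int n) * gcd (a + 1) (int n) = 2 * int n \<and> Gnam_split n a m
           \<longrightarrow> H2 (Gnam n a m) TYPE('k) \<cong> integer_mod_group 2)"
proof -
  interpret gnam n a m using assms(2,4,5) by unfold_locales
  have two: "(2::'k) \<noteq> 0" using assms(3) by (auto simp: of_nat_mult)
  have d_pm: "gcd (a - 1) (int n) = d_minus" "gcd (a + 1) (int n) = d_plus"
    by (simp_all add: d_minus_def d_plus_def)
  show ?thesis
    unfolding d_pm d_minus_mult_d_plus_eq_iff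
  proof (intro conjI impI)
    assume "d_plus = int N \<or> \<not> Gnam_split n a m"
    then have "d_plus = int N \<or> \<not> d_plus dvd m"
      using iso_Gnam_0_if_d_plus_dvd_m by (auto simp: Gnam_split_def)
    then show "trivial_group (H2 G TYPE('k))"
      using trivial_H2I[OF group_G cocycles2_subset_coboundaries2[OF assms(1)]]
        admissible_root_power_N_eq_1 by blast
  next
    assume "d_plus = 2 * int N \<and> Gnam_split n a m"
    then obtain \<beta> :: 'k where "admissible_root \<beta>" "\<beta> ^ N = - 1"
      using exists_admissible_root_power_N_eq_minus_1[OF assms(1)]
        d_plus_dvd_m_if_split[OF assms(1) two] by blast
    then show "H2 G TYPE('k) \<cong> integer_mod_group 2"
      by (rule H2_iso_integer_mod_group_2_if_root[OF assms(1) two])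
  qed
qed

end
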